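(* Let $n=2$, $c\equiv1$ and $u_0(x)=-|x|$. For $\varepsilon>0$ let $u^\varepsilon$ be the unique viscosity solution of $$u^\varepsilon_t-\varepsilon\,\mathrm{tr}\{(I_2-\widehat{Du^\varepsilon}\otimes\widehat{Du^\varepsilon})D^2u^\varepsilon\}-|Du^\varepsilon|=0\ \text{in }\mathbb{R}^2\times(0,\infty),\qquad u^\varepsilon(\cdot,0)=u_0,$$ (i.e. $u^\varepsilon_t+F(\varepsilon D^2u^\varepsilon,Du^\varepsilon,x/\varepsilon)=0$ with $F(X,p,y)=-\mathrm{tr}\{(I_2-\hat p\otimes\hat p)X\}-c(y)|p|$), and let $u$ be the unique viscosity solution of the effective problem $u_t+\overline{F}(Du/|Du|)|Du|=0$ in $\mathbb{R}^2\times(0,\infty)$, $u(\cdot,0)=u_0$. Then for any $\varepsilon>0$ and any $(x,t)\in\mathbb{R}^2\times[0,\infty)$ with $|x|=t>\varepsilon(1+e^{-1})$, $$|u^\varepsilon(x,t)-u(x,t)|\geq\frac12\varepsilon\Big(\log\Big(\frac{t}{\varepsilon}-1\Big)+1\Big).$$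
   Context: $\hat p=p/|p|$ for $p\neq0$. For each $p\in\mathbb{R}^2$, $\overline{F}(p)$ denotes the unique real number such that $F(D^2v,p+Dv,y)=\overline{F}(p)$ admits a $\mathbb{Z}^2$-periodic viscosity solution (for $c\equiv1$ this gives $\overline{F}(p)=-|p|$). Solutions are viscosity solutions in the sense appropriate for geometric equations. *)

theory Defs
  imports "HOL-Analysis.Analysis"
begin

type_synonym vec2 = "real^2"
type_synonym mat2 = "real^2^2"

text \<open>Unit vector \<open>p/|p|\<close> (only used for \<open>p \<noteq> 0\<close>).\<close>
definition unitv :: "vec2 \<Rightarrow> vec2" where
  "unitv p = (1 / norm p) *\<^sub>R p"

definition outer :: "vec2 \<Rightarrow> vec2 \<Rightarrow> mat2" where
  "outer a b = (\<chi> i j. a $ i * b $ j)"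

definition cfun :: "vec2 \<Rightarrow> real" where
  "cfun y = 1"

definition Fop :: "mat2 \<Rightarrow> vec2 \<Rightarrow> vec2 \<Rightarrow> real" where
  "Fop X p y = - trace ((mat 1 - outer (unitv p) (unitv p)) ** X) - cfun y * norm p"

text \<open>Lower / upper semicontinuous envelopes in \<open>(X,p)\<close> of an operator that is
  defined only for \<open>p \<noteq> 0\<close> (geometric equations).\<close>
definition lower_env :: "(mat2 \<Rightarrow> vec2 \<Rightarrow> real) \<Rightarrow> mat2 \<Rightarrow> vec2 \<Rightarrow> real" where
  "lower_env G X p = (SUP \<delta>\<in>{0<..}. INF Yq\<in>{(Y,q). dist (Y,q) (X,p) < \<delta> \<and> q \<noteq> 0}. G (fst Yq) (snd Yq))"

definition upper_env :: "(mat2 \<Rightarrow> vec2 \<Rightarrow> real) \<Rightarrow> mat2 \<Rightarrow> vec2 \<Rightarrow> real" where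
  "upper_env G X p = (INF \<delta>\<in>{0<..}. SUP Yq\<in>{(Y,q). dist (Y,q) (X,p) < \<delta> \<and> q \<noteq> 0}. G (fst Yq) (snd Yq))"

definition C2_test :: "(vec2 \<Rightarrow> real) \<Rightarrow> (vec2 \<Rightarrow> vec2) \<Rightarrow> (vec2 \<Rightarrow> mat2) \<Rightarrow> bool" where
  "C2_test \<phi> D\<phi> D2\<phi> \<longleftrightarrow>
     continuous_on UNIV D2\<phi> \<and>
     (\<forall>y. (\<phi> has_derivative (\<lambda>h. D\<phi> y \<bullet> h)) (at y)) \<and>
     (\<forall>y. (D\<phi> has_derivative (\<lambda>h. D2\<phi> y *v h)) (at y))"

definition C21_test :: "(vec2 \<times> real \<Rightarrow> real) \<Rightarrow> (vec2 \<times> real \<Rightarrow> real) \<Rightarrow>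
    (vec2 \<times> real \<Rightarrow> vec2) \<Rightarrow> (vec2 \<times> real \<Rightarrow> mat2) \<Rightarrow> bool" where
  "C21_test \<phi> \<phi>t D\<phi> D2\<phi> \<longleftrightarrow>
     continuous_on UNIV \<phi>t \<and> continuous_on UNIV D\<phi> \<and> continuous_on UNIV D2\<phi> \<and>
     (\<forall>x t. ((\<lambda>s. \<phi> (x, s)) has_real_derivative \<phi>t (x, t)) (at t)) \<and>
     (\<forall>x t. ((\<lambda>y. \<phi> (y, t)) has_derivative (\<lambda>h. D\<phi> (x, t) \<bullet> h)) (at x)) \<and>
     (\<forall>x t. ((\<lambda>y. D\<phi> (y, t)) has_derivative (\<lambda>h. D2\<phi> (x, t) *v h)) (at x))"

text \<open>Viscosity sub/supersolutions (geometric sense) of the cell problem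
  \<open>H(D^2v, P + Dv, y) = \<lambda>\<close> on \<open>\<real>^2\<close>.\<close>
definition cell_sub :: "(mat2 \<Rightarrow> vec2 \<Rightarrow> vec2 \<Rightarrow> real) \<Rightarrow> vec2 \<Rightarrow> real \<Rightarrow> (vec2 \<Rightarrow> real) \<Rightarrow> bool" where
  "cell_sub H P lam v \<longleftrightarrow>
     (\<forall>\<phi> D\<phi> D2\<phi> y. C2_test \<phi> D\<phi> D2\<phi> \<longrightarrow>
        (\<exists>r>0. \<forall>w\<in>ball y r. v w - \<phi> w \<le> v y - \<phi> y) \<longrightarrow>
        lower_env (\<lambda>X q. H X q y) (D2\<phi> y) (P + D\<phi> y) \<le> lam)"

definition cell_super :: "(mat2 \<Rightarrow> vec2 \<Rightarrow> vec2 \<Rightarrow> real) \<Rightarrow> vec2 \<Rightarrow> real \<Rightarrow> (vec2 \<Rightarrow> real) \<Rightarrow> bool" where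
  "cell_super H P lam v \<longleftrightarrow>
     (\<forall>\<phi> D\<phi> D2\<phi> y. C2_test \<phi> D\<phi> D2\<phi> \<longrightarrow>
        (\<exists>r>0. \<forall>w\<in>ball y r. v w - \<phi> w \<ge> v y - \<phi> y) \<longrightarrow>
        upper_env (\<lambda>X q. H X q y) (D2\<phi> y) (P + D\<phi> y) \<ge> lam)"

definition periodic2 :: "(vec2 \<Rightarrow> real) \<Rightarrow> bool" where
  "periodic2 v \<longleftrightarrow> (\<forall>y i. v (y + axis i 1) = v y)"

definition Fbar :: "vec2 \<Rightarrow> real" where
  "Fbar p = (THE lam. \<exists>v. continuous_on UNIV v \<and> periodic2 v \<and>
                         cell_sub Fop p lam v \<and> cell_super Fop p lam v)"

text \<open>Viscosity sub/supersolutions (geometric sense) of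
  \<open>u_t + G(D^2u, Du, x) = 0\<close> in \<open>\<real>^2 \<times> (0,\<infinity>)\<close>.\<close>
definition par_sub :: "(mat2 \<Rightarrow> vec2 \<Rightarrow> vec2 \<Rightarrow> real) \<Rightarrow> (vec2 \<times> real \<Rightarrow> real) \<Rightarrow> bool" where
  "par_sub G u \<longleftrightarrow>
     (\<forall>\<phi> \<phi>t D\<phi> D2\<phi> x t. C21_test \<phi> \<phi>t D\<phi> D2\<phi> \<longrightarrow> t > 0 \<longrightarrow>
        (\<exists>r>0. \<forall>w\<in>ball (x,t) r. u w - \<phi> w \<le> u (x,t) - \<phi> (x,t)) \<longrightarrow>
        \<phi>t (x,t) + lower_env (\<lambda>X q. G X q x) (D2\<phi> (x,t)) (D\<phi> (x,t)) \<le> 0)"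

definition par_super :: "(mat2 \<Rightarrow> vec2 \<Rightarrow> vec2 \<Rightarrow> real) \<Rightarrow> (vec2 \<times> real \<Rightarrow> real) \<Rightarrow> bool" where
  "par_super G u \<longleftrightarrow>
     (\<forall>\<phi> \<phi>t D\<phi> D2\<phi> x t. C21_test \<phi> \<phi>t D\<phi> D2\<phi> \<longrightarrow> t > 0 \<longrightarrow>
        (\<exists>r>0. \<forall>w\<in>ball (x,t) r. u w - \<phi> w \<ge> u (x,t) - \<phi> (x,t)) \<longrightarrow>
        \<phi>t (x,t) + upper_env (\<lambda>X q. G X q x) (D2\<phi> (x,t)) (D\<phi> (x,t)) \<ge> 0)"

text \<open>Solution of the Cauchy problem with initial datum \<open>u0\<close>, in the uniqueness class
  of continuous functions on \<open>\<real>^2 \<times> [0,\<infinity>)\<close> that are uniformly continuous on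
  \<open>\<real>^2 \<times> [0,T]\<close> for every \<open>T\<close>.\<close>
definition cauchy_sol :: "(mat2 \<Rightarrow> vec2 \<Rightarrow> vec2 \<Rightarrow> real) \<Rightarrow> (vec2 \<Rightarrow> real) \<Rightarrow> (vec2 \<times> real \<Rightarrow> real) \<Rightarrow> bool" where
  "cauchy_sol G u0 u \<longleftrightarrow>
     continuous_on (UNIV \<times> {0..}) u \<and>
     (\<forall>T\<ge>0. uniformly_continuous_on (UNIV \<times> {0..T}) u) \<and>
     (\<forall>x. u (x, 0) = u0 x) \<and> par_sub G u \<and> par_super G u"

definition Feps :: "real \<Rightarrow> mat2 \<Rightarrow> vec2 \<Rightarrow> vec2 \<Rightarrow> real" where
  "Feps \<epsilon> X p x = Fop (\<epsilon> *\<^sub>R X) p ((1 / \<epsilon>) *\<^sub>R x)"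

definition Feff :: "mat2 \<Rightarrow> vec2 \<Rightarrow> vec2 \<Rightarrow> real" where
  "Feff X p x = Fbar (unitv p) * norm p"

end

theory Submission
  imports Defs
begin

text \<open>For \<open>c \<equiv> 1\<close> the cell problem is solved by \<open>v = 0\<close>, so \<open>Fbar p = -|p|\<close> and the
  effective problem is \<open>u\<^sub>t = |Du|\<close>, whose solution \<open>-(|x| - t)\<^sup>+\<close> vanishes on the cone
  \<open>|x| = t\<close>. Neither Cauchy problem is solved explicitly: both solutions are compared, on
  bounded cylinders, with radial barriers. A smoothed cone \<open>-(|x| - s)\<^sup>+\<close>, slowed down by a
  small multiple of \<open>s\<close>, is a strict subsolution of the effective problem, whence \<open>u \<ge> 0\<close> on
  the cone. For the \<open>\<epsilon>\<close>-problem, \<open>w = s/2 - |x|/2 - (\<epsilon>/2) log |x|\<close> (smoothed and shifted) is a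
  supersolution: the excess \<open>\<epsilon>/(2|x|)\<close> of \<open>|Dw|\<close> over \<open>w\<^sub>s = 1/2\<close> is compensated by the
  curvature term. Hence \<open>u\<^sup>\<epsilon> \<le> -(\<epsilon>/2) (log (t/\<epsilon>) + 1)\<close> on the cone, slightly more than
  claimed. Uniform continuity in time controls the solutions far away and at the top of the
  cylinders, where the barriers are lifted by terms growing in \<open>|x|\<close> and by an exponential
  in time.\<close>

lemma inner_vec2: "(x::vec2) \<bullet> y = x$1 * y$1 + x$2 * y$2"
  by (simp add: inner_vec_def sum_2)

lemma norm_vec2_power2: "(norm (x::vec2))\<^sup>2 = (x$1)\<^sup>2 + (x$2)\<^sup>2"
  unfolding power2_norm_eq_inner by (simp add: inner_vec2 power2_eq_square)

lemma vec2_eq_iff: "(x::vec2) = y \<longleftrightarrow> x$1 = y$1 \<and> x$2 = y$2"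
  by (simp add: vec_eq_iff forall_2)

lemma matrix_vector_mult_vec2:
  fixes X :: mat2 and h :: vec2
  shows "(X *v h)$1 = X$1$1 * h$1 + X$1$2 * h$2" "(X *v h)$2 = X$2$1 * h$1 + X$2$2 * h$2"
  by (simp_all add: matrix_vector_mult_def sum_2)

lemma outer_mult_vec: "outer x x *v h = (x \<bullet> h) *\<^sub>R x"
  by (simp add: vec2_eq_iff matrix_vector_mult_vec2 outer_def inner_vec2 algebra_simps)

lemma norm_unitv: "q \<noteq> 0 \<Longrightarrow> norm (unitv q) = 1"
  by (simp add: unitv_def)

definition rot90 :: "vec2 \<Rightarrow> vec2" where
  "rot90 u = (\<chi> i. if i = 1 then - u$2 else u$1)"

lemma rot90_nth: "rot90 u $ 1 = - u$2" "rot90 u $ 2 = u$1"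
  by (simp_all add: rot90_def)

definition tangential_trace :: "vec2 \<Rightarrow> mat2 \<Rightarrow> real" where
  "tangential_trace u Z = trace ((mat 1 - outer u u) ** Z)"

lemma tangential_trace_expand:
  "tangential_trace u Z = Z$1$1 + Z$2$2
     - (u$1 * u$1 * Z$1$1 + u$1 * u$2 * Z$2$1 + u$2 * u$1 * Z$1$2 + u$2 * u$2 * Z$2$2)"
  unfolding tangential_trace_def trace_def matrix_matrix_mult_def outer_def
  by (simp add: sum_2 mat_def algebra_simps)

lemma tangential_trace_add: "tangential_trace u (Y + Z) = tangential_trace u Y + tangential_trace u Z"
  by (simp add: tangential_trace_expand algebra_simps)

lemma tangential_trace_diff: "tangential_trace u (Y - Z) = tangential_trace u Y - tangential_trace u Z"
  by (simp add: tangential_trace_expand algebra_simps)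

lemma tangential_trace_scaleR: "tangential_trace u (c *\<^sub>R Z) = c * tangential_trace u Z"
  by (simp add: tangential_trace_expand algebra_simps)

lemma tangential_trace_mat1: "norm u = 1 \<Longrightarrow> tangential_trace u (mat 1) = 1"
  using norm_vec2_power2[of u] by (simp add: tangential_trace_expand mat_def power2_eq_square)

lemma abs_tangential_trace_le:
  assumes "norm u \<le> 1"
  shows "\<bar>tangential_trace u Z\<bar> \<le> 6 * norm Z"
proof -
  have entry: "\<bar>Z$i$j\<bar> \<le> norm Z" for i j
    using component_le_norm_cart[of "Z$i" j] Finite_Cartesian_Product.norm_nth_le[of Z i] by linarith
  have "\<bar>u$i * u$j * Z$k$l\<bar> \<le> norm Z" for i j k l
  proof -
    have "\<bar>u$i\<bar> \<le> 1" "\<bar>u$j\<bar> \<le> 1"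
      using component_le_norm_cart[of u i] component_le_norm_cart[of u j] assms by linarith+
    then have "\<bar>u$i * u$j\<bar> * \<bar>Z$k$l\<bar> \<le> 1 * norm Z"
      using entry[of k l] by (intro mult_mono) (auto simp: abs_mult mult_le_one)
    then show ?thesis by (simp add: abs_mult)
  qed
  from this[of 1 1 1 1] this[of 1 2 2 1] this[of 2 1 1 2] this[of 2 2 2 2] entry[of 1 1] entry[of 2 2]
  show ?thesis unfolding tangential_trace_expand by (simp add: abs_le_iff)
qed

lemma tangential_trace_outer_parallel:
  assumes "x \<noteq> 0" and "c \<noteq> 0"
  shows "tangential_trace (unitv (c *\<^sub>R x)) (outer x x) = 0"
proof -
  have "unitv (c *\<^sub>R x) = (sgn c / norm x) *\<^sub>R x"
    using assms by (simp add: unitv_def divide_simps sgn_if)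
  moreover have "tangential_trace ((sgn c / norm x) *\<^sub>R x) (outer x x)
      = ((x$1)\<^sup>2 + (x$2)\<^sup>2) - ((x$1)\<^sup>2 + (x$2)\<^sup>2)\<^sup>2 / (norm x)\<^sup>2"
    using assms by (simp add: tangential_trace_expand outer_def power2_eq_square sgn_if field_simps)
  ultimately show ?thesis
    using assms norm_vec2_power2[of x] by (simp add: power2_eq_square)
qed

lemma tangential_trace_rot90:
  assumes "norm u = 1"
  shows "tangential_trace u Z = rot90 u \<bullet> (Z *v rot90 u)"
proof -
  have "(u$1)\<^sup>2 + (u$2)\<^sup>2 = 1" using norm_vec2_power2[of u] assms by simp
  then have "tangential_trace u Z = Z$1$1 * ((u$1)\<^sup>2 + (u$2)\<^sup>2) + Z$2$2 * ((u$1)\<^sup>2 + (u$2)\<^sup>2)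
      - (u$1 * u$1 * Z$1$1 + u$1 * u$2 * Z$2$1 + u$2 * u$1 * Z$1$2 + u$2 * u$2 * Z$2$2)"
    by (simp add: tangential_trace_expand)
  then show ?thesis
    by (simp add: inner_vec2 matrix_vector_mult_vec2 rot90_nth power2_eq_square algebra_simps)
qed

lemma isCont_tangential_trace_unitv:
  assumes "p \<noteq> 0"
  shows "isCont (\<lambda>z. tangential_trace (unitv (snd z)) (fst z)) (X, p)"
proof -
  have "(\<lambda>z. tangential_trace (unitv (snd z)) (fst z)) = (\<lambda>z::mat2 \<times> vec2.
     fst z$1$1 + fst z$2$2 - ((snd z$1 / norm (snd z)) * (snd z$1 / norm (snd z)) * fst z$1$1
     + (snd z$1 / norm (snd z)) * (snd z$2 / norm (snd z)) * fst z$2$1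
     + (snd z$2 / norm (snd z)) * (snd z$1 / norm (snd z)) * fst z$1$2
     + (snd z$2 / norm (snd z)) * (snd z$2 / norm (snd z)) * fst z$2$2))"
    by (simp add: tangential_trace_expand unitv_def divide_inverse mult.commute)
  then show ?thesis using assms by (auto intro!: continuous_intros)
qed

lemma Fop_eq: "Fop X q y = - tangential_trace (unitv q) X - norm q"
  by (simp add: Fop_def tangential_trace_def cfun_def)

lemma Feps_eq: "Feps \<epsilon> X q x = - \<epsilon> * tangential_trace (unitv q) X - norm q"
  by (simp add: Feps_def Fop_eq tangential_trace_scaleR)

subsection \<open>Semicontinuous envelopes\<close>

definition locally_bounded_op :: "(mat2 \<Rightarrow> vec2 \<Rightarrow> real) \<Rightarrow> bool" where
  "locally_bounded_op G \<longleftrightarrow>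
     (\<forall>R. \<exists>M. \<forall>Y q. norm Y \<le> R \<longrightarrow> norm q \<le> R \<longrightarrow> q \<noteq> 0 \<longrightarrow> \<bar>G Y q\<bar> \<le> M)"

definition env_nbhd :: "mat2 \<Rightarrow> vec2 \<Rightarrow> real \<Rightarrow> (mat2 \<times> vec2) set" where
  "env_nbhd X p d = {(Y, q). dist (Y, q) (X, p) < d \<and> q \<noteq> 0}"

lemma lower_env_eq: "lower_env G X p = (SUP d\<in>{0<..}. INF z\<in>env_nbhd X p d. G (fst z) (snd z))"
  by (simp add: lower_env_def env_nbhd_def)

lemma upper_env_eq: "upper_env G X p = (INF d\<in>{0<..}. SUP z\<in>env_nbhd X p d. G (fst z) (snd z))"
  by (simp add: upper_env_def env_nbhd_def)

lemma dist_Pair_lt_norms: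
  assumes "dist (Y, q) (X, p) < d"
  shows "norm (Y - X) < d" "norm q < norm p + d" "norm p < norm q + d"
proof -
  have "dist Y X < d" "dist q p < d"
    using assms dist_fst_le[of "(Y, q)" "(X, p)"] dist_snd_le[of "(Y, q)" "(X, p)"] by auto
  then show "norm (Y - X) < d" "norm q < norm p + d" "norm p < norm q + d"
    using norm_triangle_ineq2[of q p] norm_triangle_ineq2[of p q]
    by (auto simp: dist_norm norm_minus_commute)
qed

lemma env_nbhd_nonempty:
  assumes "d > 0"
  shows "env_nbhd X p d \<inter> env_nbhd X p 1 \<noteq> {}"
proof -
  define e where "e = min d 1 / 2"
  have e: "0 < e" "e < d" "e < 1" using assms by (auto simp: e_def)
  define q where "q = (if p = 0 then e *\<^sub>R axis 1 1 else p)"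
  have "norm (axis 1 (1::real) :: vec2) = 1" by (simp add: norm_eq_sqrt_inner inner_axis_axis)
  then have "q \<noteq> 0" "dist (X, q) (X, p) \<le> e"
    using e by (auto simp: q_def dist_Pair_Pair dist_norm axis_eq_0_iff)
  with e have "(X, q) \<in> env_nbhd X p d \<inter> env_nbhd X p 1"
    by (auto simp: env_nbhd_def)
  then show ?thesis by blast
qed

lemma locally_bounded_opE:
  assumes "locally_bounded_op G"
  obtains M where "\<And>z. z \<in> env_nbhd X p d \<Longrightarrow> \<bar>G (fst z) (snd z)\<bar> \<le> M"
proof -
  obtain M where M: "\<And>Y q. norm Y \<le> norm X + norm p + \<bar>d\<bar> \<Longrightarrow> norm q \<le> norm X + norm p + \<bar>d\<bar>
      \<Longrightarrow> q \<noteq> 0 \<Longrightarrow> \<bar>G Y q\<bar> \<le> M"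
    using assms unfolding locally_bounded_op_def by blast
  show ?thesis
  proof (rule that)
    fix z assume z: "z \<in> env_nbhd X p d"
    then obtain Y q where z_eq: "z = (Y, q)" and "dist (Y, q) (X, p) < d" "q \<noteq> 0"
      by (auto simp: env_nbhd_def)
    then have "norm (Y - X) < d" "norm q < norm p + d" "q \<noteq> 0"
      using dist_Pair_lt_norms by auto
    moreover have "norm Y \<le> norm X + norm (Y - X)" using norm_triangle_sub[of Y X] by simp
    ultimately have "norm Y \<le> norm X + norm p + \<bar>d\<bar>" "norm q \<le> norm X + norm p + \<bar>d\<bar>"
      using norm_ge_zero[of X] norm_ge_zero[of p] by linarith+
    then show "\<bar>G (fst z) (snd z)\<bar> \<le> M" using M \<open>q \<noteq> 0\<close> z_eq by simp
  qed
qed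

lemma bdd_env_nbhd:
  assumes "locally_bounded_op G"
  shows "bdd_below ((\<lambda>z. G (fst z) (snd z)) ` env_nbhd X p d)"
    and "bdd_above ((\<lambda>z. G (fst z) (snd z)) ` env_nbhd X p d)"
proof -
  obtain M where M: "\<And>z. z \<in> env_nbhd X p d \<Longrightarrow> \<bar>G (fst z) (snd z)\<bar> \<le> M"
    using locally_bounded_opE[OF assms] by blast
  have lo: "- M \<le> G (fst z) (snd z)" and hi: "G (fst z) (snd z) \<le> M"
    if "z \<in> env_nbhd X p d" for z
    using M[OF that] abs_le_iff[of "G (fst z) (snd z)" M] by linarith+
  show "bdd_below ((\<lambda>z. G (fst z) (snd z)) ` env_nbhd X p d)" by (rule bdd_belowI2[where m="- M", OF lo])
  show "bdd_above ((\<lambda>z. G (fst z) (snd z)) ` env_nbhd X p d)" by (rule bdd_aboveI2[where M=M, OF hi])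
qed

lemma lower_env_geI:
  assumes G: "locally_bounded_op G" and "d0 > 0"
    and L: "\<And>Y q. dist (Y, q) (X, p) < d0 \<Longrightarrow> q \<noteq> 0 \<Longrightarrow> L \<le> G Y q"
  shows "L \<le> lower_env G X p"
proof -
  let ?I = "\<lambda>d. INF z\<in>env_nbhd X p d. G (fst z) (snd z)"
  obtain M where M: "\<And>z. z \<in> env_nbhd X p 1 \<Longrightarrow> \<bar>G (fst z) (snd z)\<bar> \<le> M"
    using locally_bounded_opE[OF G] by blast
  have "bdd_above (?I ` {0<..})"
  proof (rule bdd_aboveI2)
    fix d :: real assume "d \<in> {0<..}"
    then obtain z where "z \<in> env_nbhd X p d" "z \<in> env_nbhd X p 1"
      using env_nbhd_nonempty[of d X p] by auto
    then have "?I d \<le> G (fst z) (snd z)" by (intro cINF_lower[OF bdd_env_nbhd(1)[OF G]])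
    also have "\<dots> \<le> M" using M[OF \<open>z \<in> env_nbhd X p 1\<close>] by simp
    finally show "?I d \<le> M" .
  qed
  moreover have "env_nbhd X p d0 \<noteq> {}" using env_nbhd_nonempty[OF \<open>d0 > 0\<close>, of X p] by blast
  then have "L \<le> ?I d0" using L by (rule cINF_greatest) (auto simp: env_nbhd_def)
  ultimately show ?thesis
    unfolding lower_env_eq using cSUP_upper[of d0 "{0<..}" ?I] \<open>d0 > 0\<close> by simp
qed

lemma upper_env_leI:
  assumes G: "locally_bounded_op G" and "d0 > 0"
    and U: "\<And>Y q. dist (Y, q) (X, p) < d0 \<Longrightarrow> q \<noteq> 0 \<Longrightarrow> G Y q \<le> U"
  shows "upper_env G X p \<le> U"
proof -
  let ?S = "\<lambda>d. SUP z\<in>env_nbhd X p d. G (fst z) (snd z)"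
  obtain M where M: "\<And>z. z \<in> env_nbhd X p 1 \<Longrightarrow> \<bar>G (fst z) (snd z)\<bar> \<le> M"
    using locally_bounded_opE[OF G] by blast
  have "bdd_below (?S ` {0<..})"
  proof (rule bdd_belowI2)
    fix d :: real assume "d \<in> {0<..}"
    then obtain z where "z \<in> env_nbhd X p d" "z \<in> env_nbhd X p 1"
      using env_nbhd_nonempty[of d X p] by auto
    then have "G (fst z) (snd z) \<le> ?S d" by (intro cSUP_upper[OF _ bdd_env_nbhd(2)[OF G]])
    moreover have "- M \<le> G (fst z) (snd z)" using M[OF \<open>z \<in> env_nbhd X p 1\<close>] by simp
    ultimately show "- M \<le> ?S d" by linarith
  qed
  moreover have "env_nbhd X p d0 \<noteq> {}" using env_nbhd_nonempty[OF \<open>d0 > 0\<close>, of X p] by blast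
  then have "?S d0 \<le> U" using U by (rule cSUP_least) (auto simp: env_nbhd_def)
  ultimately show ?thesis
    unfolding upper_env_eq using cINF_lower[of "?S" "{0<..}" d0] \<open>d0 > 0\<close> by simp
qed

lemma lower_env_le:
  assumes G: "locally_bounded_op G" and "p \<noteq> 0"
  shows "lower_env G X p \<le> G X p"
  unfolding lower_env_eq
proof (rule cSUP_least)
  fix d :: real assume "d \<in> {0<..}"
  then have "(X, p) \<in> env_nbhd X p d" using \<open>p \<noteq> 0\<close> by (simp add: env_nbhd_def)
  from cINF_lower[OF bdd_env_nbhd(1)[OF G] this]
  show "(INF z\<in>env_nbhd X p d. G (fst z) (snd z)) \<le> G X p" by simp
qed simp

lemma upper_env_ge:
  assumes G: "locally_bounded_op G" and "p \<noteq> 0"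
  shows "G X p \<le> upper_env G X p"
  unfolding upper_env_eq
proof (rule cINF_greatest)
  fix d :: real assume "d \<in> {0<..}"
  then have "(X, p) \<in> env_nbhd X p d" using \<open>p \<noteq> 0\<close> by (simp add: env_nbhd_def)
  from cSUP_upper[OF this bdd_env_nbhd(2)[OF G]]
  show "G X p \<le> (SUP z\<in>env_nbhd X p d. G (fst z) (snd z))" by simp
qed simp

lemma lower_env_ge_isCont:
  assumes G: "locally_bounded_op G" and g: "\<And>Y q. q \<noteq> 0 \<Longrightarrow> G Y q = g (Y, q)"
    and cont: "isCont g (X, p)"
  shows "g (X, p) \<le> lower_env G X p"
proof (rule field_le_epsilon)
  fix e :: real assume "e > 0"
  with cont obtain d where "d > 0" and d: "\<And>z. dist z (X, p) < d \<Longrightarrow> dist (g z) (g (X, p)) < e"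
    unfolding continuous_at_eps_delta by blast
  have "g (X, p) - e \<le> lower_env G X p"
  proof (rule lower_env_geI[OF G \<open>d > 0\<close>])
    fix Y q assume "dist (Y, q) (X, p) < d" "q \<noteq> 0"
    then show "g (X, p) - e \<le> G Y q" using d[of "(Y, q)"] g by (simp add: dist_real_def abs_less_iff)
  qed
  then show "g (X, p) \<le> lower_env G X p + e" by simp
qed

lemma upper_env_le_isCont:
  assumes G: "locally_bounded_op G" and g: "\<And>Y q. q \<noteq> 0 \<Longrightarrow> G Y q = g (Y, q)"
    and cont: "isCont g (X, p)"
  shows "upper_env G X p \<le> g (X, p)"
proof (rule field_le_epsilon)
  fix e :: real assume "e > 0"
  with cont obtain d where "d > 0" and d: "\<And>z. dist z (X, p) < d \<Longrightarrow> dist (g z) (g (X, p)) < e"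
    unfolding continuous_at_eps_delta by blast
  have "upper_env G X p \<le> g (X, p) + e"
  proof (rule upper_env_leI[OF G \<open>d > 0\<close>])
    fix Y q assume "dist (Y, q) (X, p) < d" "q \<noteq> 0"
    then show "G Y q \<le> g (X, p) + e" using d[of "(Y, q)"] g by (simp add: dist_real_def abs_less_iff)
  qed
  then show "upper_env G X p \<le> g (X, p) + e" .
qed

lemma locally_bounded_Feps: "locally_bounded_op (\<lambda>X q. Feps \<epsilon> X q x)"
  unfolding locally_bounded_op_def
proof (intro allI exI impI)
  fix R and Y :: mat2 and q :: vec2 assume "norm Y \<le> R" "norm q \<le> R" "q \<noteq> 0"
  moreover have "\<bar>\<epsilon> * tangential_trace (unitv q) Y\<bar> \<le> \<bar>\<epsilon>\<bar> * (6 * R)"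
    unfolding abs_mult using abs_tangential_trace_le[of "unitv q" Y] norm_unitv calculation
    by (intro mult_left_mono) auto
  ultimately show "\<bar>Feps \<epsilon> Y q x\<bar> \<le> \<bar>\<epsilon>\<bar> * (6 * R) + R"
    unfolding Feps_eq abs_le_iff mult_minus_left using norm_ge_zero[of q] by linarith
qed

lemma envelopes_Feps:
  assumes "p \<noteq> 0"
  shows "lower_env (\<lambda>X q. Feps \<epsilon> X q x) X p = Feps \<epsilon> X p x"
    and "upper_env (\<lambda>X q. Feps \<epsilon> X q x) X p = Feps \<epsilon> X p x"
proof -
  let ?g = "\<lambda>z. - \<epsilon> * tangential_trace (unitv (snd z)) (fst z) - norm (snd z)"
  have g: "\<And>Y q. Feps \<epsilon> Y q x = ?g (Y, q)" by (simp add: Feps_eq)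
  have "isCont ?g (X, p)"
    using isCont_tangential_trace_unitv[OF assms] by (intro continuous_intros) auto
  then have "Feps \<epsilon> X p x \<le> lower_env (\<lambda>X q. Feps \<epsilon> X q x) X p"
    and "upper_env (\<lambda>X q. Feps \<epsilon> X q x) X p \<le> Feps \<epsilon> X p x"
    using lower_env_ge_isCont[OF locally_bounded_Feps g] upper_env_le_isCont[OF locally_bounded_Feps g]
    by (simp_all add: g)
  with lower_env_le[OF locally_bounded_Feps assms] upper_env_ge[OF locally_bounded_Feps assms]
  show "lower_env (\<lambda>X q. Feps \<epsilon> X q x) X p = Feps \<epsilon> X p x"
    and "upper_env (\<lambda>X q. Feps \<epsilon> X q x) X p = Feps \<epsilon> X p x"
    by (auto intro: antisym)
qed

lemma envelopes_Fop:
  assumes "p \<noteq> 0"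
  shows "lower_env (\<lambda>X q. Fop X q y) X p = Fop X p y"
    and "upper_env (\<lambda>X q. Fop X q y) X p = Fop X p y"
  using envelopes_Feps[OF assms, of 1 y X] by (simp_all add: Feps_def)

lemma has_real_derivative_along_line:
  fixes f :: "'a::real_normed_vector \<Rightarrow> real"
  assumes "(f has_derivative f') (at (y + s *\<^sub>R h))"
  shows "((\<lambda>s. f (y + s *\<^sub>R h)) has_real_derivative f' h) (at s)"
proof -
  have "((\<lambda>s. y + s *\<^sub>R h) has_derivative (\<lambda>d. d *\<^sub>R h)) (at s)"
    by (auto intro!: derivative_eq_intros)
  from has_derivative_compose[OF this assms]
  have "((\<lambda>s. f (y + s *\<^sub>R h)) has_derivative (\<lambda>d. f' (d *\<^sub>R h))) (at s)" .
  moreover have "(\<lambda>d. f' (d *\<^sub>R h)) = (*) (f' h)"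
    using linear_cmul[OF has_derivative_linear[OF assms]] by (auto simp: mult.commute)
  ultimately show ?thesis by (simp add: has_field_derivative_def)
qed

lemma local_min_second_derivative_nonneg:
  fixes g g' :: "real \<Rightarrow> real"
  assumes g: "\<And>s. (g has_real_derivative g' s) (at s)"
    and g': "(g' has_real_derivative g'') (at 0)" and "g' 0 = 0"
    and "r > 0" and min: "\<And>s. \<bar>s\<bar> < r \<Longrightarrow> g 0 \<le> g s"
  shows "0 \<le> g''"
proof (rule ccontr)
  assume "\<not> 0 \<le> g''"
  then obtain d where "d > 0" and dec: "\<And>h. 0 < h \<Longrightarrow> h < d \<Longrightarrow> g' h < 0"
    using DERIV_neg_dec_right[OF g'] \<open>g' 0 = 0\<close> by force
  define s where "s = min d r / 2"
  have s: "0 < s" "s < d" "s < r" using \<open>d > 0\<close> \<open>r > 0\<close> by (auto simp: s_def)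
  have "g s < g 0"
  proof (rule DERIV_neg_imp_decreasing_open[OF \<open>0 < s\<close>])
    show "\<exists>l. (g has_real_derivative l) (at x) \<and> l < 0" if "0 < x" "x < s" for x
      using g dec[of x] that s by force
    show "continuous_on {0..s} g"
      using g by (meson DERIV_isCont continuous_at_imp_continuous_on)
  qed
  moreover have "g 0 \<le> g s" using min s by simp
  ultimately show False by simp
qed

lemma C2_test_local_min:
  assumes C: "C2_test \<phi> D\<phi> D2\<phi>" and "r > 0" and min: "\<forall>w\<in>ball y r. \<phi> y \<le> \<phi> w"
  shows "D\<phi> y = 0" and "0 \<le> h \<bullet> (D2\<phi> y *v h)"
proof -
  have d1: "\<And>z. (\<phi> has_derivative (\<lambda>h. D\<phi> z \<bullet> h)) (at z)"
    and d2: "\<And>z. (D\<phi> has_derivative (\<lambda>h. D2\<phi> z *v h)) (at z)"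
    using C unfolding C2_test_def by auto
  have "eventually (\<lambda>w. \<phi> y \<le> \<phi> w) (at y)"
    using eventually_at_ball[OF \<open>r > 0\<close>, of y UNIV] min by (auto elim: eventually_mono)
  from has_derivative_local_min[OF d1 this] have "D\<phi> y \<bullet> D\<phi> y = 0" by meson
  then show "D\<phi> y = 0" by simp
  have grad: "((\<lambda>s. \<phi> (y + s *\<^sub>R h)) has_real_derivative D\<phi> (y + s *\<^sub>R h) \<bullet> h) (at s)" for s
    by (rule has_real_derivative_along_line) (rule d1)
  have "((\<lambda>w. D\<phi> w \<bullet> h) has_derivative (\<lambda>k. (D2\<phi> y *v k) \<bullet> h)) (at (y + 0 *\<^sub>R h))"
    using has_derivative_inner_left[OF d2[of y]] by simp
  from has_real_derivative_along_line[OF this]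
  have hess: "((\<lambda>s. D\<phi> (y + s *\<^sub>R h) \<bullet> h) has_real_derivative (D2\<phi> y *v h) \<bullet> h) (at 0)" .
  let ?r = "r / (norm h + 1)"
  have "?r > 0" using \<open>r > 0\<close> by (simp add: add_nonneg_pos)
  moreover have "\<phi> (y + 0 *\<^sub>R h) \<le> \<phi> (y + s *\<^sub>R h)" if "\<bar>s\<bar> < ?r" for s
  proof -
    have "\<bar>s\<bar> * norm h \<le> \<bar>s\<bar> * (norm h + 1)" by (simp add: mult_left_mono)
    also have "\<dots> < r" using that by (simp add: pos_less_divide_eq add_nonneg_pos)
    finally show ?thesis using min by (simp add: dist_norm)
  qed
  ultimately have "0 \<le> (D2\<phi> y *v h) \<bullet> h"
    using local_min_second_derivative_nonneg[OF grad hess] \<open>D\<phi> y = 0\<close> by simp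
  then show "0 \<le> h \<bullet> (D2\<phi> y *v h)" by (simp add: inner_commute)
qed

lemma uminus_matrix_vector_mult: "(- A) *v x = - (A *v x :: vec2)"
  by (simp add: vec_eq_iff matrix_vector_mult_def sum_negf vector_uminus_component)

lemma C2_test_uminus: "C2_test \<phi> D\<phi> D2\<phi> \<Longrightarrow> C2_test (\<lambda>y. - \<phi> y) (\<lambda>y. - D\<phi> y) (\<lambda>y. - D2\<phi> y)"
  unfolding C2_test_def
  by (auto intro!: continuous_intros derivative_eq_intros simp: uminus_matrix_vector_mult)

lemma C2_test_const: "C2_test (\<lambda>_. c) (\<lambda>_. 0) (\<lambda>_. 0)"
  by (simp add: C2_test_def)

subsection \<open>The effective operator\<close>

lemma periodic2_shift_nat: "periodic2 v \<Longrightarrow> v (y + real n *\<^sub>R axis i 1) = v y"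
proof (induction n arbitrary: y)
  case (Suc n)
  have "v (y + real (Suc n) *\<^sub>R axis i 1) = v ((y + real n *\<^sub>R axis i 1) + axis i 1)"
    by (simp add: algebra_simps)
  also have "\<dots> = v (y + real n *\<^sub>R axis i 1)" using Suc.prems unfolding periodic2_def by blast
  finally show ?case using Suc by simp
qed simp

lemma periodic2_shift_int: "periodic2 v \<Longrightarrow> v (y + of_int k *\<^sub>R axis i 1) = v y"
proof (cases "k \<ge> 0")
  case True
  then show "periodic2 v \<Longrightarrow> ?thesis" using periodic2_shift_nat[of v y "nat k"] by simp
next
  case False
  assume "periodic2 v"
  from periodic2_shift_nat[OF this, of "y + of_int k *\<^sub>R axis i 1" "nat (- k)" i] False
  show ?thesis by simp
qed

lemma periodic2_attains_max:
  assumes "continuous_on UNIV v" and "periodic2 v"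
  obtains y0 where "\<And>y. v y \<le> v y0"
proof -
  have "(0::vec2) \<in> cbox 0 1" by (simp add: mem_box_cart)
  then obtain y0 where y0: "\<forall>y\<in>cbox 0 1. v y \<le> v y0"
    using continuous_attains_sup[OF compact_cbox _ continuous_on_subset[OF assms(1)]] by blast
  show ?thesis
  proof (rule that)
    fix y :: vec2
    define z where "z = (y + of_int (- \<lfloor>y$1\<rfloor>) *\<^sub>R axis 1 1) + of_int (- \<lfloor>y$2\<rfloor>) *\<^sub>R axis 2 1"
    have "v z = v y" unfolding z_def by (simp only: periodic2_shift_int[OF assms(2)])
    moreover have "z \<in> cbox 0 1"
      unfolding mem_box_cart forall_2 z_def by (simp add: axis_def) linarith
    ultimately show "v y \<le> v y0" using y0 by metis
  qed
qed

lemma cell_sub_zero: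
  assumes "p \<noteq> 0"
  shows "cell_sub Fop p (- norm p) (\<lambda>_. 0)"
  unfolding cell_sub_def
proof (intro allI impI)
  fix \<phi> D\<phi> D2\<phi> y assume C: "C2_test \<phi> D\<phi> D2\<phi>" and "\<exists>r>0. \<forall>w\<in>ball y r. 0 - \<phi> w \<le> 0 - \<phi> y"
  then obtain r where "r > 0" "\<forall>w\<in>ball y r. \<phi> y \<le> \<phi> w" by auto
  note min = C2_test_local_min[OF C this]
  have "0 \<le> tangential_trace (unitv p) (D2\<phi> y)"
    using min(2) by (simp add: tangential_trace_rot90[OF norm_unitv[OF assms]])
  then show "lower_env (\<lambda>X q. Fop X q y) (D2\<phi> y) (p + D\<phi> y) \<le> - norm p"
    using min(1) envelopes_Fop(1)[OF assms, of y "D2\<phi> y"] by (simp add: Fop_eq)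
qed

lemma cell_super_zero:
  assumes "p \<noteq> 0"
  shows "cell_super Fop p (- norm p) (\<lambda>_. 0)"
  unfolding cell_super_def
proof (intro allI impI)
  fix \<phi> D\<phi> D2\<phi> y assume C: "C2_test \<phi> D\<phi> D2\<phi>" and "\<exists>r>0. \<forall>w\<in>ball y r. 0 - \<phi> y \<le> 0 - \<phi> w"
  then obtain r where "r > 0" "\<forall>w\<in>ball y r. - \<phi> y \<le> - \<phi> w" by auto
  note min = C2_test_local_min[OF C2_test_uminus[OF C] this]
  have "tangential_trace (unitv p) (D2\<phi> y) \<le> 0"
    using min(2) by (simp add: tangential_trace_rot90[OF norm_unitv[OF assms]] uminus_matrix_vector_mult)
  then show "- norm p \<le> upper_env (\<lambda>X q. Fop X q y) (D2\<phi> y) (p + D\<phi> y)"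
    using min(1) envelopes_Fop(2)[OF assms, of y "D2\<phi> y"] by (simp add: Fop_eq)
qed

lemma cell_solution_eigenvalue:
  assumes "p \<noteq> 0" and "continuous_on UNIV v" and "periodic2 v"
    and sub: "cell_sub Fop p lam v" and super: "cell_super Fop p lam v"
  shows "lam = - norm p"
proof -
  \<comment> \<open>constant test functions touch \<open>v\<close> at its extremal points\<close>
  obtain y0 where y0: "\<And>y. v y \<le> v y0" using periodic2_attains_max assms(2,3) by blast
  obtain y1 where y1: "\<And>y. - v y \<le> - v y1"
    using periodic2_attains_max[of "\<lambda>y. - v y"] assms(2,3)
    by (auto intro: continuous_intros simp: periodic2_def)
  have "\<exists>r>0. \<forall>w\<in>ball y0 r. v w - (\<lambda>_. 0) w \<le> v y0 - (\<lambda>_. 0) y0"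
    using y0 by (intro exI[of _ 1]) auto
  from sub[unfolded cell_sub_def, rule_format, OF C2_test_const this]
  have "lower_env (\<lambda>X q. Fop X q y0) 0 p \<le> lam" by simp
  moreover have "\<exists>r>0. \<forall>w\<in>ball y1 r. v w - (\<lambda>_. 0) w \<ge> v y1 - (\<lambda>_. 0) y1"
    using y1 by (intro exI[of _ 1]) auto
  from super[unfolded cell_super_def, rule_format, OF C2_test_const this]
  have "lam \<le> upper_env (\<lambda>X q. Fop X q y1) 0 p" by simp
  ultimately show ?thesis
    using envelopes_Fop[OF assms(1)] by (simp add: Fop_eq tangential_trace_expand)
qed

lemma Fbar_eq:
  assumes "p \<noteq> 0"
  shows "Fbar p = - norm p"
  unfolding Fbar_def
proof (rule the_equality)
  show "\<exists>v. continuous_on UNIV v \<and> periodic2 v \<and> cell_sub Fop p (- norm p) v \<and> cell_super Fop p (- norm p) v"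
    using cell_sub_zero[OF assms] cell_super_zero[OF assms]
    by (intro exI[of _ "\<lambda>_. 0"]) (simp add: periodic2_def)
qed (use cell_solution_eigenvalue[OF assms] in blast)

lemma Feff_eq: "q \<noteq> 0 \<Longrightarrow> Feff X q y = - norm q"
proof -
  assume "q \<noteq> 0"
  then have "norm (unitv q) = 1" by (rule norm_unitv)
  then have "unitv q \<noteq> 0" by auto
  then show ?thesis using Fbar_eq[of "unitv q"] \<open>norm (unitv q) = 1\<close> by (simp add: Feff_def)
qed

lemma locally_bounded_Feff: "locally_bounded_op (\<lambda>X q. Feff X q y)"
  unfolding locally_bounded_op_def by (auto simp: Feff_eq)

definition radial_grad :: "real \<Rightarrow> vec2 \<Rightarrow> vec2" where
  "radial_grad \<alpha> x = (2 * \<alpha>) *\<^sub>R x"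

definition radial_hess :: "real \<Rightarrow> real \<Rightarrow> vec2 \<Rightarrow> mat2" where
  "radial_hess \<alpha> \<beta> x = (2 * \<alpha>) *\<^sub>R mat 1 + (4 * \<beta>) *\<^sub>R outer x x"

lemma continuous_on_compose_norm_square:
  assumes "continuous_on ({0..} \<times> UNIV) (\<lambda>w. B (fst w) (snd w))"
  shows "continuous_on UNIV (\<lambda>z::vec2 \<times> real. B (fst z \<bullet> fst z) (snd z))"
proof -
  have "continuous_on UNIV (\<lambda>z::vec2 \<times> real. (fst z \<bullet> fst z, snd z))"
    by (intro continuous_intros)
  moreover have "(\<lambda>z::vec2 \<times> real. (fst z \<bullet> fst z, snd z)) ` UNIV \<subseteq> {0..} \<times> UNIV" by auto
  ultimately show ?thesis using continuous_on_compose2[OF assms] by fastforce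
qed

lemma has_derivative_radial:
  assumes "(f has_real_derivative f') (at (x \<bullet> x))"
  shows "((\<lambda>y::vec2. f (y \<bullet> y)) has_derivative (\<lambda>h. radial_grad f' x \<bullet> h)) (at x)"
proof -
  have "((\<lambda>y::vec2. y \<bullet> y) has_derivative (\<lambda>h. x \<bullet> h + h \<bullet> x)) (at x)"
    by (rule has_derivative_inner[OF has_derivative_ident has_derivative_ident])
  from has_derivative_compose[OF this has_field_derivative_imp_has_derivative[OF assms]]
  show ?thesis
    by (rule has_derivative_eq_rhs) (auto simp: radial_grad_def inner_commute algebra_simps)
qed

lemma has_derivative_radial_grad:
  assumes "(g has_real_derivative g') (at (x \<bullet> x))"
  shows "((\<lambda>y::vec2. radial_grad (g (y \<bullet> y)) y) has_derivative
     (\<lambda>h. radial_hess (g (x \<bullet> x)) g' x *v h)) (at x)"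
proof -
  have "((\<lambda>y. 2 * g (y \<bullet> y)) has_derivative (\<lambda>h. 2 * (radial_grad g' x \<bullet> h))) (at x)"
    by (rule has_derivative_mult_right[OF has_derivative_radial[OF assms]])
  from has_derivative_scaleR[OF this has_derivative_ident]
  show ?thesis
    unfolding radial_grad_def
    by (rule has_derivative_eq_rhs)
       (auto simp: radial_hess_def matrix_vector_mult_add_rdistrib scaleR_matrix_vector_assoc[symmetric]
         outer_mult_vec algebra_simps)
qed

lemma C21_test_radial:
  fixes A Aq Aqq As :: "real \<Rightarrow> real \<Rightarrow> real"
  assumes dq: "\<And>q s. q \<ge> 0 \<Longrightarrow> ((\<lambda>q. A q s) has_real_derivative Aq q s) (at q)"
    and dqq: "\<And>q s. q \<ge> 0 \<Longrightarrow> ((\<lambda>q. Aq q s) has_real_derivative Aqq q s) (at q)"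
    and ds: "\<And>q s. q \<ge> 0 \<Longrightarrow> ((\<lambda>s. A q s) has_real_derivative As q s) (at s)"
    and cs: "continuous_on ({0..} \<times> UNIV) (\<lambda>w. As (fst w) (snd w))"
    and cq: "continuous_on ({0..} \<times> UNIV) (\<lambda>w. Aq (fst w) (snd w))"
    and cqq: "continuous_on ({0..} \<times> UNIV) (\<lambda>w. Aqq (fst w) (snd w))"
  shows "C21_test (\<lambda>z. A (fst z \<bullet> fst z) (snd z)) (\<lambda>z. As (fst z \<bullet> fst z) (snd z))
     (\<lambda>z. radial_grad (Aq (fst z \<bullet> fst z) (snd z)) (fst z))
     (\<lambda>z. radial_hess (Aq (fst z \<bullet> fst z) (snd z)) (Aqq (fst z \<bullet> fst z) (snd z)) (fst z))"
  unfolding C21_test_def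
proof (intro conjI allI)
  have "continuous_on UNIV (\<lambda>z::vec2 \<times> real. outer (fst z) (fst z))"
    unfolding outer_def by (intro continuous_on_vec_lambda continuous_intros)
  with continuous_on_compose_norm_square[OF cs] continuous_on_compose_norm_square[OF cq]
    continuous_on_compose_norm_square[OF cqq]
  show "continuous_on UNIV (\<lambda>z::vec2 \<times> real. As (fst z \<bullet> fst z) (snd z))"
    and "continuous_on UNIV (\<lambda>z::vec2 \<times> real. radial_grad (Aq (fst z \<bullet> fst z) (snd z)) (fst z))"
    and "continuous_on UNIV (\<lambda>z::vec2 \<times> real.
       radial_hess (Aq (fst z \<bullet> fst z) (snd z)) (Aqq (fst z \<bullet> fst z) (snd z)) (fst z))"
    unfolding radial_grad_def radial_hess_def by (auto intro!: continuous_intros)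
  fix x :: vec2 and t :: real
  show "((\<lambda>s. A (fst (x, s) \<bullet> fst (x, s)) (snd (x, s))) has_real_derivative
      As (fst (x, t) \<bullet> fst (x, t)) (snd (x, t))) (at t)"
    using ds[of "x \<bullet> x" t] by simp
  show "((\<lambda>y. A (fst (y, t) \<bullet> fst (y, t)) (snd (y, t))) has_derivative
      (\<lambda>h. radial_grad (Aq (fst (x, t) \<bullet> fst (x, t)) (snd (x, t))) (fst (x, t)) \<bullet> h)) (at x)"
    using has_derivative_radial[OF dq[of "x \<bullet> x" t]] by simp
  show "((\<lambda>y. radial_grad (Aq (fst (y, t) \<bullet> fst (y, t)) (snd (y, t))) (fst (y, t))) has_derivative
      (\<lambda>h. radial_hess (Aq (fst (x, t) \<bullet> fst (x, t)) (snd (x, t)))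
        (Aqq (fst (x, t) \<bullet> fst (x, t)) (snd (x, t))) (fst (x, t)) *v h)) (at x)"
    using has_derivative_radial_grad[OF dqq[of "x \<bullet> x" t]] by simp
qed

lemma tangential_trace_radial_hess:
  assumes "x \<noteq> 0" and "\<alpha> \<noteq> 0"
  shows "tangential_trace (unitv (radial_grad \<alpha> x)) (radial_hess \<alpha> \<beta> x) = 2 * \<alpha>"
proof -
  have "norm (unitv ((2 * \<alpha>) *\<^sub>R x)) = 1" using assms by (intro norm_unitv) simp
  then show ?thesis
    using tangential_trace_outer_parallel[of x "2 * \<alpha>"] assms
    by (simp add: radial_grad_def radial_hess_def tangential_trace_add tangential_trace_scaleR
        tangential_trace_mat1)
qed

subsection \<open>Comparison with barriers\<close>

lemma exists_interior_local_max:
  fixes f :: "'a::euclidean_space \<times> real \<Rightarrow> real"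
  assumes cont: "continuous_on (UNIV \<times> {0..}) f"
    and bottom: "\<And>x. f (x, 0) \<le> 0" and top: "\<And>x. f (x, T) \<le> 0"
    and far: "\<And>x s. R \<le> norm x \<Longrightarrow> 0 \<le> s \<Longrightarrow> s \<le> T \<Longrightarrow> f (x, s) \<le> 0"
    and "0 \<le> s1" "s1 \<le> T" and pos: "f (x1, s1) > 0"
  shows "\<exists>x0 s0. 0 < s0 \<and> s0 < T \<and> (\<exists>r>0. \<forall>w\<in>ball (x0, s0) r. f w \<le> f (x0, s0))"
proof -
  let ?K = "cball (0::'a) R \<times> {0..T}"
  have "(x1, s1) \<in> ?K" using far[of x1 s1] pos \<open>0 \<le> s1\<close> \<open>s1 \<le> T\<close> by force
  moreover have "continuous_on ?K f" using cont by (rule continuous_on_subset) auto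
  ultimately obtain x0 s0 where K: "(x0, s0) \<in> ?K" and max: "\<And>w. w \<in> ?K \<Longrightarrow> f w \<le> f (x0, s0)"
    using continuous_attains_sup[of ?K f] by (fastforce intro: compact_Times)
  then have "f (x0, s0) > 0" using pos \<open>(x1, s1) \<in> ?K\<close> by fastforce
  then have s0: "0 < s0" "s0 < T" and x0: "norm x0 < R"
    using K bottom[of x0] top[of x0] far[of x0 s0] by (auto simp: less_le)
  define r where "r = min (min s0 (T - s0)) (R - norm x0)"
  have "r > 0" using s0 x0 by (simp add: r_def)
  moreover have "f w \<le> f (x0, s0)" if "w \<in> ball (x0, s0) r" for w
  proof -
    obtain y \<tau> where w: "w = (y, \<tau>)" by (cases w)
    then have "dist x0 y < r" "dist s0 \<tau> < r"
      using that dist_fst_le[of "(x0, s0)" w] dist_snd_le[of "(x0, s0)" w] by auto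
    then have "norm y \<le> R" "0 \<le> \<tau>" "\<tau> \<le> T"
      using norm_triangle_ineq2[of y x0] unfolding r_def dist_norm dist_real_def
      by (auto simp: norm_minus_commute)
    then show ?thesis using max w by auto
  qed
  ultimately show ?thesis using s0 by blast
qed

lemma comparison_sub:
  assumes sub: "par_sub G v" and "continuous_on (UNIV \<times> {0..}) v"
    and C: "C21_test \<psi> \<psi>t D\<psi> D2\<psi>" and "continuous_on UNIV \<psi>"
    and strict: "\<And>x s. 0 < s \<Longrightarrow> s < T \<Longrightarrow>
       \<psi>t (x, s) + lower_env (\<lambda>X q. G X q x) (D2\<psi> (x, s)) (D\<psi> (x, s)) > 0"
    and "\<And>x. v (x, 0) \<le> \<psi> (x, 0)" and "\<And>x. v (x, T) \<le> \<psi> (x, T)"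
    and "\<And>x s. R \<le> norm x \<Longrightarrow> 0 \<le> s \<Longrightarrow> s \<le> T \<Longrightarrow> v (x, s) \<le> \<psi> (x, s)"
    and "0 \<le> s" "s \<le> T"
  shows "v (x, s) \<le> \<psi> (x, s)"
proof (rule ccontr)
  assume "\<not> v (x, s) \<le> \<psi> (x, s)"
  then have pos: "v (x, s) - \<psi> (x, s) > 0" by simp
  have cont: "continuous_on (UNIV \<times> {0..}) (\<lambda>z. v z - \<psi> z)"
    by (rule continuous_on_diff[OF assms(2) continuous_on_subset[OF assms(4) subset_UNIV]])
  have "\<And>x. v (x, 0) - \<psi> (x, 0) \<le> 0" "\<And>x. v (x, T) - \<psi> (x, T) \<le> 0"
    "\<And>x s. R \<le> norm x \<Longrightarrow> 0 \<le> s \<Longrightarrow> s \<le> T \<Longrightarrow> v (x, s) - \<psi> (x, s) \<le> 0"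
    using assms(6-8) by simp_all
  from exists_interior_local_max[OF cont this \<open>0 \<le> s\<close> \<open>s \<le> T\<close> pos]
  obtain x0 s0 where s0: "0 < s0" "s0 < T"
    and loc: "\<exists>r>0. \<forall>w\<in>ball (x0, s0) r. v w - \<psi> w \<le> v (x0, s0) - \<psi> (x0, s0)" by blast
  from sub[unfolded par_sub_def, rule_format, OF C \<open>0 < s0\<close> loc]
  have "\<psi>t (x0, s0) + lower_env (\<lambda>X q. G X q x0) (D2\<psi> (x0, s0)) (D\<psi> (x0, s0)) \<le> 0" .
  with strict[of s0 x0] s0 show False by linarith
qed

lemma comparison_super:
  assumes super: "par_super G v" and "continuous_on (UNIV \<times> {0..}) v"
    and C: "C21_test \<psi> \<psi>t D\<psi> D2\<psi>" and "continuous_on UNIV \<psi>"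
    and strict: "\<And>x s. 0 < s \<Longrightarrow> s < T \<Longrightarrow>
       \<psi>t (x, s) + upper_env (\<lambda>X q. G X q x) (D2\<psi> (x, s)) (D\<psi> (x, s)) < 0"
    and "\<And>x. \<psi> (x, 0) \<le> v (x, 0)" and "\<And>x. \<psi> (x, T) \<le> v (x, T)"
    and "\<And>x s. R \<le> norm x \<Longrightarrow> 0 \<le> s \<Longrightarrow> s \<le> T \<Longrightarrow> \<psi> (x, s) \<le> v (x, s)"
    and "0 \<le> s" "s \<le> T"
  shows "\<psi> (x, s) \<le> v (x, s)"
proof (rule ccontr)
  assume "\<not> \<psi> (x, s) \<le> v (x, s)"
  then have pos: "\<psi> (x, s) - v (x, s) > 0" by simp
  have cont: "continuous_on (UNIV \<times> {0..}) (\<lambda>z. \<psi> z - v z)"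
    by (rule continuous_on_diff[OF continuous_on_subset[OF assms(4) subset_UNIV] assms(2)])
  have "\<And>x. \<psi> (x, 0) - v (x, 0) \<le> 0" "\<And>x. \<psi> (x, T) - v (x, T) \<le> 0"
    "\<And>x s. R \<le> norm x \<Longrightarrow> 0 \<le> s \<Longrightarrow> s \<le> T \<Longrightarrow> \<psi> (x, s) - v (x, s) \<le> 0"
    using assms(6-8) by simp_all
  from exists_interior_local_max[OF cont this \<open>0 \<le> s\<close> \<open>s \<le> T\<close> pos]
  obtain x0 s0 where s0: "0 < s0" "s0 < T"
    and "\<exists>r>0. \<forall>w\<in>ball (x0, s0) r. \<psi> w - v w \<le> \<psi> (x0, s0) - v (x0, s0)" by blast
  then have loc: "\<exists>r>0. \<forall>w\<in>ball (x0, s0) r. v w - \<psi> w \<ge> v (x0, s0) - \<psi> (x0, s0)"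
    by (simp add: algebra_simps)
  from super[unfolded par_super_def, rule_format, OF C \<open>0 < s0\<close> loc]
  have "\<psi>t (x0, s0) + upper_env (\<lambda>X q. G X q x0) (D2\<psi> (x0, s0)) (D\<psi> (x0, s0)) \<ge> 0" .
  with strict[of s0 x0] s0 show False by linarith
qed

lemma uniformly_continuous_on_time_drift:
  fixes v :: "'a::metric_space \<times> real \<Rightarrow> real"
  assumes "uniformly_continuous_on (UNIV \<times> {0..T}) v"
  obtains C where "\<And>x s. 0 \<le> s \<Longrightarrow> s \<le> T \<Longrightarrow> \<bar>v (x, s) - v (x, 0)\<bar> \<le> C"
proof -
  obtain d where "d > 0" and d: "\<And>z z'. z \<in> UNIV \<times> {0..T} \<Longrightarrow> z' \<in> UNIV \<times> {0..T} \<Longrightarrow>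
      dist z' z < d \<Longrightarrow> dist (v z') (v z) < 1"
    using assms unfolding uniformly_continuous_on_def by (meson zero_less_one)
  have steps: "\<bar>v (x, s) - v (x, 0)\<bar> \<le> real n" if "0 \<le> s" "s \<le> T" "s \<le> real n * (d / 2)" for n x s
    using that
  proof (induction n arbitrary: s)
    case (Suc n)
    define s' where "s' = max 0 (s - d / 2)"
    have s': "0 \<le> s'" "s' \<le> T" "s' \<le> real n * (d / 2)" "dist (x, s) (x, s') < d"
      using Suc.prems \<open>d > 0\<close> mult_nonneg_nonneg[of d "real n"]
      by (auto simp: s'_def dist_Pair_Pair dist_real_def algebra_simps split: split_max)
    then have "\<bar>v (x, s) - v (x, s')\<bar> < 1"
      using d[of "(x, s')" "(x, s)"] Suc.prems by (simp add: dist_real_def)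
    with Suc.IH[OF s'(1-3)] show ?case by linarith
  qed simp
  obtain n :: nat where "T / (d / 2) \<le> real n" using real_arch_simple by blast
  then have "T \<le> real n * (d / 2)" using \<open>d > 0\<close> by (simp add: field_simps)
  with steps[where n=n] show ?thesis by (intro that[of "real n"]) auto
qed

lemma cauchy_sol_drift:
  assumes "cauchy_sol G u0 u" and "T \<ge> 0"
  obtains C where "C \<ge> 0" and "\<And>x s. 0 \<le> s \<Longrightarrow> s \<le> T \<Longrightarrow> \<bar>u (x, s) - u0 x\<bar> \<le> C"
proof -
  have "uniformly_continuous_on (UNIV \<times> {0..T}) u" and "\<And>x. u (x, 0) = u0 x"
    using assms unfolding cauchy_sol_def by auto
  then obtain C where "\<And>x s. 0 \<le> s \<Longrightarrow> s \<le> T \<Longrightarrow> \<bar>u (x, s) - u0 x\<bar> \<le> C"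
    using uniformly_continuous_on_time_drift by metis
  moreover from this[of 0] have "C \<ge> 0" using \<open>T \<ge> 0\<close> by force
  ultimately show ?thesis using that by blast
qed

subsection \<open>A logarithmic supersolution of the \<open>\<epsilon>\<close>-problem\<close>

lemma has_real_derivative_sqrt_shift:
  "q + c > 0 \<Longrightarrow> ((\<lambda>q. sqrt (q + c)) has_real_derivative 1 / (2 * sqrt (q + c))) (at q)"
  by (auto intro!: derivative_eq_intros simp: field_simps)

lemma has_real_derivative_inverse_sqrt_shift:
  "q + c > 0 \<Longrightarrow>
     ((\<lambda>q. 1 / (2 * sqrt (q + c))) has_real_derivative - 1 / (4 * (q + c) * sqrt (q + c))) (at q)"
  by (auto intro!: derivative_eq_intros simp: field_simps power2_eq_square)

text \<open>A smoothing of \<open>|x|/2 + (\<epsilon>/2) log |x|\<close>, written in \<open>q = |x|\<^sup>2\<close>; the constant makes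
  it at most \<open>|x|\<close>.\<close>

definition log_profile :: "real \<Rightarrow> real \<Rightarrow> real \<Rightarrow> real" where
  "log_profile \<epsilon> \<mu> q = sqrt (q + \<mu>\<^sup>2) / 2 + \<epsilon> / 4 * ln (q + \<mu>\<^sup>2) - \<epsilon> / 2 * (ln \<epsilon> - 1) - \<mu>"

definition log_profile' :: "real \<Rightarrow> real \<Rightarrow> real \<Rightarrow> real" where
  "log_profile' \<epsilon> \<mu> q = 1 / (4 * sqrt (q + \<mu>\<^sup>2)) + \<epsilon> / (4 * (q + \<mu>\<^sup>2))"

definition log_profile'' :: "real \<Rightarrow> real \<Rightarrow> real \<Rightarrow> real" where
  "log_profile'' \<epsilon> \<mu> q = - 1 / (8 * (q + \<mu>\<^sup>2) * sqrt (q + \<mu>\<^sup>2)) - \<epsilon> / (4 * (q + \<mu>\<^sup>2)\<^sup>2)"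

lemma has_real_derivative_log_profile:
  assumes "\<mu> > 0" and "q \<ge> 0"
  shows "((\<lambda>q. log_profile \<epsilon> \<mu> q) has_real_derivative log_profile' \<epsilon> \<mu> q) (at q)"
    and "((\<lambda>q. log_profile' \<epsilon> \<mu> q) has_real_derivative log_profile'' \<epsilon> \<mu> q) (at q)"
proof -
  have pos: "q + \<mu>\<^sup>2 > 0" using assms by (simp add: add_nonneg_pos)
  have ln: "((\<lambda>q. ln (q + \<mu>\<^sup>2)) has_real_derivative 1 / (q + \<mu>\<^sup>2)) (at q)"
    and inv: "((\<lambda>q. 1 / (q + \<mu>\<^sup>2)) has_real_derivative - 1 / (q + \<mu>\<^sup>2)\<^sup>2) (at q)"
    using pos by (auto intro!: derivative_eq_intros simp: power2_eq_square)
  have S: "sqrt (q + \<mu>\<^sup>2) > 0" using pos by simp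
  have "((\<lambda>q. sqrt (q + \<mu>\<^sup>2) / 2 + \<epsilon> / 4 * ln (q + \<mu>\<^sup>2) - \<epsilon> / 2 * (ln \<epsilon> - 1) - \<mu>)
      has_real_derivative 1 / (2 * sqrt (q + \<mu>\<^sup>2)) / 2 + \<epsilon> / 4 * (1 / (q + \<mu>\<^sup>2)) - 0 - 0) (at q)"
    by (intro DERIV_diff DERIV_add DERIV_cdivide DERIV_cmult DERIV_const ln
        has_real_derivative_sqrt_shift pos)
  moreover have "1 / (2 * sqrt (q + \<mu>\<^sup>2)) / 2 + \<epsilon> / 4 * (1 / (q + \<mu>\<^sup>2)) - 0 - 0 = log_profile' \<epsilon> \<mu> q"
    using pos S by (simp add: log_profile'_def field_simps)
  ultimately show "((\<lambda>q. log_profile \<epsilon> \<mu> q) has_real_derivative log_profile' \<epsilon> \<mu> q) (at q)"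
    by (simp add: log_profile_def)
  have "((\<lambda>q. 1 / (2 * sqrt (q + \<mu>\<^sup>2)) / 2 + \<epsilon> / 4 * (1 / (q + \<mu>\<^sup>2)))
      has_real_derivative - 1 / (4 * (q + \<mu>\<^sup>2) * sqrt (q + \<mu>\<^sup>2)) / 2 + \<epsilon> / 4 * (- 1 / (q + \<mu>\<^sup>2)\<^sup>2))
      (at q)"
    by (intro DERIV_add DERIV_cdivide DERIV_cmult inv has_real_derivative_inverse_sqrt_shift pos)
  moreover have "- 1 / (4 * (q + \<mu>\<^sup>2) * sqrt (q + \<mu>\<^sup>2)) / 2 + \<epsilon> / 4 * (- 1 / (q + \<mu>\<^sup>2)\<^sup>2)
      = log_profile'' \<epsilon> \<mu> q"
    using pos S by (simp add: log_profile''_def field_simps)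
  moreover have "(\<lambda>q. 1 / (2 * sqrt (q + \<mu>\<^sup>2)) / 2 + \<epsilon> / 4 * (1 / (q + \<mu>\<^sup>2))) = log_profile' \<epsilon> \<mu>"
    by (auto simp: log_profile'_def)
  ultimately show "((\<lambda>q. log_profile' \<epsilon> \<mu> q) has_real_derivative log_profile'' \<epsilon> \<mu> q) (at q)"
    by simp
qed

lemma log_profile'_pos: "\<epsilon> > 0 \<Longrightarrow> \<mu> > 0 \<Longrightarrow> q \<ge> 0 \<Longrightarrow> log_profile' \<epsilon> \<mu> q > 0"
  unfolding log_profile'_def by (intro add_pos_pos) (simp_all add: add_nonneg_pos)

lemma log_profile'_slope:
  assumes "\<epsilon> > 0" and "\<mu> > 0" and "r \<ge> 0"
  shows "2 * log_profile' \<epsilon> \<mu> (r\<^sup>2) * (r - \<epsilon>) \<le> 1 / 2"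
proof (cases "r \<le> \<epsilon>")
  case True
  then have "2 * log_profile' \<epsilon> \<mu> (r\<^sup>2) * (r - \<epsilon>) \<le> 0"
    using log_profile'_pos[OF assms(1,2), of "r\<^sup>2"] by (intro mult_nonneg_nonpos) auto
  then show ?thesis by linarith
next
  case False
  then have "r > 0" using assms by linarith
  have "r \<le> sqrt (r\<^sup>2 + \<mu>\<^sup>2)" by (simp add: real_le_rsqrt)
  then have "1 / (4 * sqrt (r\<^sup>2 + \<mu>\<^sup>2)) \<le> 1 / (4 * r)" using \<open>r > 0\<close> by (simp add: frac_le)
  moreover have "\<epsilon> / (4 * (r\<^sup>2 + \<mu>\<^sup>2)) \<le> \<epsilon> / (4 * r\<^sup>2)"
    using \<open>r > 0\<close> assms by (intro divide_left_mono) (auto simp: add_nonneg_pos)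
  ultimately have "log_profile' \<epsilon> \<mu> (r\<^sup>2) \<le> 1 / (4 * r) + \<epsilon> / (4 * r\<^sup>2)"
    unfolding log_profile'_def by linarith
  then have "2 * log_profile' \<epsilon> \<mu> (r\<^sup>2) * (r - \<epsilon>) \<le> 2 * (1 / (4 * r) + \<epsilon> / (4 * r\<^sup>2)) * (r - \<epsilon>)"
    using False by (intro mult_right_mono) auto
  also have "\<dots> = (r\<^sup>2 - \<epsilon>\<^sup>2) / (2 * r\<^sup>2)" using \<open>r > 0\<close> by (simp add: field_simps power2_eq_square)
  also have "\<dots> \<le> 1 / 2" using \<open>r > 0\<close> by (simp add: field_simps)
  finally show ?thesis .
qed

lemma ln_le_tangent: "(y::real) > 0 \<Longrightarrow> M > 0 \<Longrightarrow> ln y \<le> ln M + y / M - 1"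
  using ln_le_minus_one[of "y / M"] by (simp add: ln_div)

lemma log_profile_le:
  assumes "\<epsilon> > 0" and "\<mu> > 0" and "r \<ge> 0" and "M > 0"
  shows "log_profile \<epsilon> \<mu> (r\<^sup>2) \<le> r / 2 + \<mu> / 2 + \<epsilon> / 2 * (ln M + (r + \<mu>) / M - 1) - \<epsilon> / 2 * (ln \<epsilon> - 1) - \<mu>"
proof -
  define Z where "Z = ln M + (r + \<mu>) / M - 1"
  have le: "r\<^sup>2 + \<mu>\<^sup>2 \<le> (r + \<mu>)\<^sup>2" using assms by (simp add: power2_sum)
  then have sqrt: "sqrt (r\<^sup>2 + \<mu>\<^sup>2) \<le> r + \<mu>" using assms by (intro real_le_lsqrt) auto
  have "0 < r\<^sup>2 + \<mu>\<^sup>2" using assms by (simp add: add_nonneg_pos)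
  with le have "ln (r\<^sup>2 + \<mu>\<^sup>2) \<le> ln ((r + \<mu>)\<^sup>2)" by (rule ln_mono)
  also have "\<dots> = 2 * ln (r + \<mu>)" using assms by (simp add: ln_realpow)
  also have "\<dots> \<le> 2 * Z"
    using ln_le_tangent[of "r + \<mu>" M] assms unfolding Z_def[symmetric] by (simp add: add_nonneg_pos)
  finally have "\<epsilon> / 4 * ln (r\<^sup>2 + \<mu>\<^sup>2) \<le> \<epsilon> / 4 * (2 * Z)"
    using assms by (intro mult_left_mono) auto
  with sqrt show ?thesis unfolding log_profile_def Z_def[symmetric] by linarith
qed

lemma log_profile_le_norm:
  "\<epsilon> > 0 \<Longrightarrow> \<mu> > 0 \<Longrightarrow> r \<ge> 0 \<Longrightarrow> log_profile \<epsilon> \<mu> (r\<^sup>2) \<le> r"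
  using log_profile_le[of \<epsilon> \<mu> r \<epsilon>] by (simp add: field_simps)

lemma log_profile_le_linear:
  assumes "\<epsilon> > 0" and "\<mu> > 0" and "r \<ge> 0"
  shows "log_profile \<epsilon> \<mu> (r\<^sup>2) \<le> 3 / 4 * r + \<epsilon>"
proof -
  have "r / 2 + \<mu> / 2 + \<epsilon> / 2 * (ln (2 * \<epsilon>) + (r + \<mu>) / (2 * \<epsilon>) - 1) - \<epsilon> / 2 * (ln \<epsilon> - 1) - \<mu>
      = 3 / 4 * r - \<mu> / 4 + \<epsilon> / 2 * ln 2"
    using assms by (simp add: ln_mult field_simps)
  then have "log_profile \<epsilon> \<mu> (r\<^sup>2) \<le> 3 / 4 * r - \<mu> / 4 + \<epsilon> / 2 * ln 2"
    using log_profile_le[OF assms, of "2 * \<epsilon>"] assms by simp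
  moreover have "\<epsilon> / 2 * ln 2 \<le> \<epsilon>" using ln_2_less_1 assms by simp
  ultimately show ?thesis using assms by linarith
qed

lemma log_profile_ge:
  assumes "\<epsilon> > 0" and "\<mu> > 0" and "t > 0"
  shows "t / 2 + \<epsilon> / 2 * (ln (t / \<epsilon>) + 1) - \<mu> \<le> log_profile \<epsilon> \<mu> (t\<^sup>2)"
proof -
  have "ln (t\<^sup>2) \<le> ln (t\<^sup>2 + \<mu>\<^sup>2)" using assms by (simp add: add_nonneg_pos)
  then have "\<epsilon> / 4 * (2 * ln t) \<le> \<epsilon> / 4 * ln (t\<^sup>2 + \<mu>\<^sup>2)"
    using assms by (intro mult_left_mono) (simp_all add: ln_realpow)
  moreover have "t \<le> sqrt (t\<^sup>2 + \<mu>\<^sup>2)" by (simp add: real_le_rsqrt)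
  moreover have "\<epsilon> / 2 * (ln (t / \<epsilon>) + 1) = \<epsilon> / 4 * (2 * ln t) - \<epsilon> / 2 * (ln \<epsilon> - 1)"
    using assms by (simp add: ln_div field_simps)
  ultimately show ?thesis unfolding log_profile_def by linarith
qed

text \<open>With \<open>k = ln (K/\<mu>)\<close> the term \<open>K exp (k (s - T))\<close> is \<open>K\<close> at the top \<open>s = T\<close> but only
  \<open>\<mu>\<close> at \<open>s = T - 1\<close>.\<close>

definition log_barrier :: "real \<Rightarrow> real \<Rightarrow> real \<Rightarrow> real \<Rightarrow> real \<Rightarrow> real \<Rightarrow> real \<Rightarrow> real" where
  "log_barrier \<epsilon> \<mu> K k T q s = s / 2 + K * exp (k * (s - T)) - log_profile \<epsilon> \<mu> q"

lemma C21_test_log_barrier: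
  assumes "\<mu> > 0"
  shows "C21_test (\<lambda>z. log_barrier \<epsilon> \<mu> K k T (fst z \<bullet> fst z) (snd z))
     (\<lambda>z. 1 / 2 + K * k * exp (k * (snd z - T)))
     (\<lambda>z. radial_grad (- log_profile' \<epsilon> \<mu> (fst z \<bullet> fst z)) (fst z))
     (\<lambda>z. radial_hess (- log_profile' \<epsilon> \<mu> (fst z \<bullet> fst z)) (- log_profile'' \<epsilon> \<mu> (fst z \<bullet> fst z)) (fst z))"
proof (rule C21_test_radial[where Aq="\<lambda>q s. - log_profile' \<epsilon> \<mu> q" and Aqq="\<lambda>q s. - log_profile'' \<epsilon> \<mu> q"
      and As="\<lambda>q s. 1 / 2 + K * k * exp (k * (s - T))"])
  fix q s :: real assume "q \<ge> 0"
  note d = has_real_derivative_log_profile[OF assms this]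
  show "((\<lambda>q. log_barrier \<epsilon> \<mu> K k T q s) has_real_derivative - log_profile' \<epsilon> \<mu> q) (at q)"
    unfolding log_barrier_def using d(1) by (auto intro!: derivative_eq_intros)
  show "((\<lambda>q. - log_profile' \<epsilon> \<mu> q) has_real_derivative - log_profile'' \<epsilon> \<mu> q) (at q)"
    using d(2) by (rule DERIV_minus)
  show "((\<lambda>s. log_barrier \<epsilon> \<mu> K k T q s) has_real_derivative 1 / 2 + K * k * exp (k * (s - T))) (at s)"
    unfolding log_barrier_def by (auto intro!: derivative_eq_intros)
next
  have pos: "\<And>a. 0 \<le> a \<Longrightarrow> 0 < a + \<mu>\<^sup>2" using assms by (simp add: add_nonneg_pos)
  show "continuous_on ({0..} \<times> UNIV) (\<lambda>w::real \<times> real. - log_profile' \<epsilon> \<mu> (fst w))"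
    and "continuous_on ({0..} \<times> UNIV) (\<lambda>w::real \<times> real. - log_profile'' \<epsilon> \<mu> (fst w))"
    unfolding log_profile'_def log_profile''_def
    by (auto intro!: continuous_intros) (smt (verit) pos)+
qed (intro continuous_intros)

lemma continuous_log_barrier:
  assumes "\<mu> > 0"
  shows "continuous_on UNIV (\<lambda>z::vec2 \<times> real. log_barrier \<epsilon> \<mu> K k T (fst z \<bullet> fst z) (snd z))"
proof -
  have "\<And>z::vec2 \<times> real. fst z \<bullet> fst z + \<mu>\<^sup>2 > 0" using assms by (simp add: add_nonneg_pos)
  then show ?thesis unfolding log_barrier_def log_profile_def
    by (intro continuous_intros) (auto simp: less_imp_neq[symmetric])
qed

lemma lower_env_Feps_at_scalar:
  assumes "\<epsilon> > 0" and "c \<le> 0" and "e > 0"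
  shows "- e \<le> lower_env (\<lambda>X q. Feps \<epsilon> X q x) (c *\<^sub>R mat 1) 0"
proof -
  define d where "d = e / (6 * \<epsilon> + 1)"
  have "d > 0" using assms by (simp add: d_def)
  then show ?thesis
  proof (rule lower_env_geI[OF locally_bounded_Feps])
    fix Y :: mat2 and q :: vec2 assume dist: "dist (Y, q) (c *\<^sub>R mat 1, 0) < d" and "q \<noteq> 0"
    have u: "norm (unitv q) = 1" using \<open>q \<noteq> 0\<close> by (rule norm_unitv)
    have "tangential_trace (unitv q) Y = c + tangential_trace (unitv q) (Y - c *\<^sub>R mat 1)"
      using u by (simp add: tangential_trace_diff tangential_trace_scaleR tangential_trace_mat1)
    also have "\<dots> \<le> 6 * d"
      using abs_tangential_trace_le[of "unitv q" "Y - c *\<^sub>R mat 1"] u dist_Pair_lt_norms(1)[OF dist] assms(2)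
      by (simp add: abs_le_iff)
    finally have "\<epsilon> * tangential_trace (unitv q) Y \<le> \<epsilon> * (6 * d)"
      using assms by (intro mult_left_mono) auto
    moreover have "norm q < d" using dist_Pair_lt_norms(2)[OF dist] by simp
    moreover have "(6 * \<epsilon> + 1) * d = e" using assms by (simp add: d_def)
    ultimately show "- e \<le> Feps \<epsilon> Y q x" unfolding Feps_eq by (simp add: algebra_simps)
  qed
qed

lemma lower_env_Feps_log_barrier:
  assumes "\<epsilon> > 0" and "\<mu> > 0"
  shows "- 1 / 2 \<le> lower_env (\<lambda>X q. Feps \<epsilon> X q x)
     (radial_hess (- log_profile' \<epsilon> \<mu> (x \<bullet> x)) (- log_profile'' \<epsilon> \<mu> (x \<bullet> x)) x)
     (radial_grad (- log_profile' \<epsilon> \<mu> (x \<bullet> x)) x)"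
proof -
  define \<alpha> where "\<alpha> = - log_profile' \<epsilon> \<mu> (x \<bullet> x)"
  define H where "H = radial_hess \<alpha> (- log_profile'' \<epsilon> \<mu> (x \<bullet> x)) x"
  have "\<alpha> < 0" unfolding \<alpha>_def using log_profile'_pos[OF assms] by simp
  show ?thesis
  proof (cases "x = 0")
    case True
    moreover have "outer 0 0 = 0" by (simp add: outer_def vec_eq_iff)
    ultimately show ?thesis
      using lower_env_Feps_at_scalar[OF \<open>\<epsilon> > 0\<close>, of "2 * \<alpha>" "1 / 2" x] \<open>\<alpha> < 0\<close>
      by (simp add: \<alpha>_def radial_hess_def radial_grad_def)
  next
    case False
    have "tangential_trace (unitv (radial_grad \<alpha> x)) H = 2 * \<alpha>"
      unfolding H_def using False \<open>\<alpha> < 0\<close> by (intro tangential_trace_radial_hess) auto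
    moreover have "norm (radial_grad \<alpha> x) = - 2 * \<alpha> * norm x"
      using \<open>\<alpha> < 0\<close> by (simp add: radial_grad_def)
    ultimately have "Feps \<epsilon> H (radial_grad \<alpha> x) x = - 2 * log_profile' \<epsilon> \<mu> ((norm x)\<^sup>2) * (norm x - \<epsilon>)"
      by (simp add: Feps_eq \<alpha>_def power2_norm_eq_inner algebra_simps)
    also have "\<dots> \<ge> - 1 / 2"
      using log_profile'_slope[OF assms norm_ge_zero, of x] by simp
    finally show ?thesis
      using False \<open>\<alpha> < 0\<close> envelopes_Feps(1)[of "radial_grad \<alpha> x" \<epsilon> x H]
      by (simp add: H_def \<alpha>_def radial_grad_def)
  qed
qed

lemma cauchy_sol_le_log_barrier:
  assumes "\<epsilon> > 0" and "\<mu> > 0" and "K > 0" and "k > 0" and "C \<le> K"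
    and sol: "cauchy_sol (Feps \<epsilon>) (\<lambda>x. - norm x) v"
    and drift: "\<And>y s. 0 \<le> s \<Longrightarrow> s \<le> T \<Longrightarrow> v (y, s) \<le> - norm y + C"
    and "0 \<le> s" "s \<le> T"
  shows "v (x, s) \<le> log_barrier \<epsilon> \<mu> K k T (x \<bullet> x) s"
proof -
  have lp: "log_profile \<epsilon> \<mu> (y \<bullet> y) \<le> norm y" "log_profile \<epsilon> \<mu> (y \<bullet> y) \<le> 3 / 4 * norm y + \<epsilon>"
    for y :: vec2
    using log_profile_le_norm[OF assms(1,2)] log_profile_le_linear[OF assms(1,2)]
    by (simp_all add: power2_norm_eq_inner[symmetric])
  have exp: "0 < K * exp (k * (s' - T))" "0 < K * k * exp (k * (s' - T))" for s'
    using assms(3,4) by simp_all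
  have "v (x, s) \<le> log_barrier \<epsilon> \<mu> K k T (fst (x, s) \<bullet> fst (x, s)) (snd (x, s))"
  proof (rule comparison_sub[where R="4 * max 0 (C + \<epsilon>)", OF _ _ C21_test_log_barrier[OF \<open>\<mu> > 0\<close>]
        continuous_log_barrier[OF \<open>\<mu> > 0\<close>]], simp_all only: fst_conv snd_conv)
    show "par_sub (Feps \<epsilon>) v" and "continuous_on (UNIV \<times> {0..}) v"
      using sol by (simp_all add: cauchy_sol_def)
    fix y :: vec2
    show "0 < 1 / 2 + K * k * exp (k * (s' - T)) + lower_env (\<lambda>X q. Feps \<epsilon> X q y)
        (radial_hess (- log_profile' \<epsilon> \<mu> (y \<bullet> y)) (- log_profile'' \<epsilon> \<mu> (y \<bullet> y)) y)
        (radial_grad (- log_profile' \<epsilon> \<mu> (y \<bullet> y)) y)" for s'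
      using lower_env_Feps_log_barrier[OF assms(1,2), of y] exp(2)[of s'] by simp
    show "v (y, 0) \<le> log_barrier \<epsilon> \<mu> K k T (y \<bullet> y) 0"
      using sol lp(1)[of y] exp(1)[of 0] by (simp add: cauchy_sol_def log_barrier_def)
    show "v (y, T) \<le> log_barrier \<epsilon> \<mu> K k T (y \<bullet> y) T"
      using drift[of T y] lp(1)[of y] \<open>C \<le> K\<close> assms(8,9) by (simp add: log_barrier_def)
    show "v (y, s') \<le> log_barrier \<epsilon> \<mu> K k T (y \<bullet> y) s'"
      if "4 * max 0 (C + \<epsilon>) \<le> norm y" "0 \<le> s'" "s' \<le> T" for s'
    proof -
      have "4 * (C + \<epsilon>) \<le> norm y" using that(1) by (smt (verit) max.cobounded2)
      then show ?thesis
        using drift[OF that(2,3), of y] lp(2)[of y] that(2) exp(1)[of s'] by (simp add: log_barrier_def)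
    qed
  qed (use assms in auto)
  then show ?thesis by simp
qed

lemma cauchy_sol_Feps_le_on_cone:
  assumes "\<epsilon> > 0" and sol: "cauchy_sol (Feps \<epsilon>) (\<lambda>x. - norm x) v"
    and "t > 0" and "norm x = t"
  shows "v (x, t) \<le> - (\<epsilon> / 2) * (ln (t / \<epsilon>) + 1)"
proof (rule field_le_epsilon)
  fix \<gamma> :: real assume "\<gamma> > 0"
  define T where "T = t + 1"
  obtain C where "C \<ge> 0" and C: "\<And>y s. 0 \<le> s \<Longrightarrow> s \<le> T \<Longrightarrow> \<bar>v (y, s) - - norm y\<bar> \<le> C"
    using cauchy_sol_drift[OF sol, of T] \<open>t > 0\<close> unfolding T_def by auto
  have drift: "v (y, s) \<le> - norm y + C" if "0 \<le> s" "s \<le> T" for y s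
    using C[OF that, of y] by (simp add: abs_le_iff)
  define \<mu> where "\<mu> = min (1 / 2) (\<gamma> / 2)"
  define K where "K = C + 1"
  define k where "k = ln (K / \<mu>)"
  have "\<mu> > 0" "\<mu> < K" using \<open>\<gamma> > 0\<close> \<open>C \<ge> 0\<close> by (auto simp: \<mu>_def K_def)
  then have "k > 0" and "K * exp (k * (t - T)) = \<mu>"
    by (simp_all add: k_def T_def exp_minus)
  have "K > 0" "C \<le> K" "0 \<le> t" "t \<le> T" using \<open>C \<ge> 0\<close> \<open>t > 0\<close> by (simp_all add: K_def T_def)
  from cauchy_sol_le_log_barrier[OF \<open>\<epsilon> > 0\<close> \<open>\<mu> > 0\<close> this(1) \<open>k > 0\<close> this(2) sol drift this(3,4)]
  have "v (x, t) \<le> log_barrier \<epsilon> \<mu> K k T (x \<bullet> x) t" .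
  also have "\<dots> = t / 2 + \<mu> - log_profile \<epsilon> \<mu> (t\<^sup>2)"
    using \<open>norm x = t\<close> \<open>K * exp (k * (t - T)) = \<mu>\<close>
    by (simp add: log_barrier_def power2_norm_eq_inner[symmetric])
  also have "\<dots> \<le> - (\<epsilon> / 2) * (ln (t / \<epsilon>) + 1) + 2 * \<mu>"
    using log_profile_ge[OF \<open>\<epsilon> > 0\<close> \<open>\<mu> > 0\<close> \<open>t > 0\<close>] by simp
  also have "\<dots> \<le> - (\<epsilon> / 2) * (ln (t / \<epsilon>) + 1) + \<gamma>" by (simp add: \<mu>_def)
  finally show "v (x, t) \<le> - (\<epsilon> / 2) * (ln (t / \<epsilon>) + 1) + \<gamma>" .
qed

subsection \<open>A conical subsolution of the effective problem\<close>

definition smooth_pos :: "real \<Rightarrow> real \<Rightarrow> real" where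
  "smooth_pos \<kappa> y = (y + sqrt (y\<^sup>2 + \<kappa>\<^sup>2)) / 2"

definition smooth_pos' :: "real \<Rightarrow> real \<Rightarrow> real" where
  "smooth_pos' \<kappa> y = (1 + y / sqrt (y\<^sup>2 + \<kappa>\<^sup>2)) / 2"

definition smooth_pos'' :: "real \<Rightarrow> real \<Rightarrow> real" where
  "smooth_pos'' \<kappa> y = \<kappa>\<^sup>2 / (2 * (y\<^sup>2 + \<kappa>\<^sup>2) * sqrt (y\<^sup>2 + \<kappa>\<^sup>2))"

lemma has_real_derivative_sqrt_square_plus:
  assumes "\<kappa> > 0"
  shows "((\<lambda>y. sqrt (y\<^sup>2 + \<kappa>\<^sup>2)) has_real_derivative y / sqrt (y\<^sup>2 + \<kappa>\<^sup>2)) (at y)"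
proof (rule DERIV_cong)
  have "y\<^sup>2 + \<kappa>\<^sup>2 > 0" using assms by (simp add: add_nonneg_pos)
  from DERIV_chain2[OF has_real_derivative_sqrt_shift[OF this] DERIV_pow[of 2 y]]
  show "((\<lambda>y. sqrt (y\<^sup>2 + \<kappa>\<^sup>2)) has_real_derivative
      1 / (2 * sqrt (y\<^sup>2 + \<kappa>\<^sup>2)) * (2 * y)) (at y)" by simp
qed simp

lemma has_real_derivative_smooth_pos:
  assumes "\<kappa> > 0"
  shows "(smooth_pos \<kappa> has_real_derivative smooth_pos' \<kappa> y) (at y)"
    and "(smooth_pos' \<kappa> has_real_derivative smooth_pos'' \<kappa> y) (at y)"
proof -
  show "(smooth_pos \<kappa> has_real_derivative smooth_pos' \<kappa> y) (at y)"
    unfolding smooth_pos_def[abs_def] smooth_pos'_def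
    by (intro DERIV_cdivide DERIV_add DERIV_ident has_real_derivative_sqrt_square_plus assms)
  define S where "S = sqrt (y\<^sup>2 + \<kappa>\<^sup>2)"
  have "y\<^sup>2 + \<kappa>\<^sup>2 > 0" using assms by (simp add: add_nonneg_pos)
  then have S: "S > 0" "S * S = y\<^sup>2 + \<kappa>\<^sup>2" by (simp_all add: S_def)
  have "((\<lambda>y. y / sqrt (y\<^sup>2 + \<kappa>\<^sup>2)) has_real_derivative (1 * S - y * (y / S)) / (S * S)) (at y)"
    unfolding S_def using S(1) assms unfolding S_def
    by (intro DERIV_divide DERIV_ident has_real_derivative_sqrt_square_plus assms) simp
  then have "(smooth_pos' \<kappa> has_real_derivative (0 + (1 * S - y * (y / S)) / (S * S)) / 2) (at y)"
    unfolding smooth_pos'_def[abs_def] by (intro DERIV_cdivide DERIV_add DERIV_const)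
  moreover have "(0 + (1 * S - y * (y / S)) / (S * S)) / 2 = smooth_pos'' \<kappa> y"
  proof -
    have "1 * S - y * (y / S) = (S * S - y\<^sup>2) / S" using S(1) by (simp add: field_simps power2_eq_square)
    also have "\<dots> = \<kappa>\<^sup>2 / S" using S(2) by simp
    finally show ?thesis
      unfolding smooth_pos''_def S_def[symmetric] S(2)[symmetric] using S(1) by simp
  qed
  ultimately show "(smooth_pos' \<kappa> has_real_derivative smooth_pos'' \<kappa> y) (at y)" by simp
qed

lemma continuous_smooth_pos: "continuous_on UNIV (smooth_pos \<kappa>)"
  unfolding smooth_pos_def[abs_def] by (intro continuous_intros) simp

lemma abs_lt_sqrt_square_plus: "\<kappa> > 0 \<Longrightarrow> \<bar>y\<bar> < sqrt (y\<^sup>2 + \<kappa>\<^sup>2)"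
  using real_sqrt_less_mono[of "y\<^sup>2" "y\<^sup>2 + \<kappa>\<^sup>2"] by simp

lemma le_smooth_pos: "\<kappa> > 0 \<Longrightarrow> y \<le> smooth_pos \<kappa> y"
  using abs_lt_sqrt_square_plus[of \<kappa> y] by (simp add: smooth_pos_def)

lemma smooth_pos_le_of_nonpos:
  assumes "\<kappa> > 0" and "y \<le> 0"
  shows "smooth_pos \<kappa> y \<le> \<kappa> / 2"
proof -
  have "y\<^sup>2 + \<kappa>\<^sup>2 \<le> (\<kappa> - y)\<^sup>2"
    using assms by (simp add: power2_eq_square algebra_simps mult_nonneg_nonpos)
  then have "sqrt (y\<^sup>2 + \<kappa>\<^sup>2) \<le> \<kappa> - y" using assms by (intro real_le_lsqrt) auto
  then show ?thesis by (simp add: smooth_pos_def)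
qed

lemma smooth_pos'_bounds:
  assumes "\<kappa> > 0"
  shows "0 \<le> smooth_pos' \<kappa> y" and "smooth_pos' \<kappa> y \<le> 1"
proof -
  define S where "S = sqrt (y\<^sup>2 + \<kappa>\<^sup>2)"
  have "\<bar>y\<bar> < S" unfolding S_def by (rule abs_lt_sqrt_square_plus[OF assms])
  then have "S > 0" "- 1 \<le> y / S" "y / S \<le> 1"
    by (auto simp: pos_divide_le_eq pos_le_divide_eq abs_less_iff)
  then show "0 \<le> smooth_pos' \<kappa> y" and "smooth_pos' \<kappa> y \<le> 1"
    by (simp_all add: smooth_pos'_def S_def[symmetric])
qed

lemma smooth_pos'_le_of_le_neg:
  assumes "\<kappa> > 0" and "d > 0" and "y \<le> - d"
  shows "smooth_pos' \<kappa> y \<le> \<kappa>\<^sup>2 / (4 * d\<^sup>2)"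
proof -
  define S where "S = sqrt (y\<^sup>2 + \<kappa>\<^sup>2)"
  have "S > \<bar>y\<bar>" unfolding S_def by (rule abs_lt_sqrt_square_plus[OF assms(1)])
  then have S: "S \<ge> d" "S - y \<ge> 2 * d" "S > 0" using assms by auto
  have "S * S = y\<^sup>2 + \<kappa>\<^sup>2" unfolding S_def by (simp add: add_nonneg_nonneg)
  then have "(S + y) * (S - y) = \<kappa>\<^sup>2" by (simp add: algebra_simps power2_eq_square)
  moreover have "smooth_pos' \<kappa> y = (1 + y / S) / 2" by (simp add: smooth_pos'_def S_def)
  then have "smooth_pos' \<kappa> y = (S + y) / (2 * S)" using S(3) by (simp add: field_simps)
  moreover have "(S + y) / (2 * S) = (S + y) * (S - y) / (2 * S * (S - y))"
    using S assms by simp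
  ultimately have "smooth_pos' \<kappa> y = \<kappa>\<^sup>2 / (2 * S * (S - y))" by simp
  also have "\<dots> \<le> \<kappa>\<^sup>2 / (4 * d\<^sup>2)"
  proof (rule divide_left_mono)
    have "d * (2 * d) \<le> S * (S - y)" using S assms by (intro mult_mono) auto
    then show "4 * d\<^sup>2 \<le> 2 * S * (S - y)" by (simp add: power2_eq_square)
  qed (use assms S in auto)
  finally show ?thesis .
qed

lemma one_minus_div_sqrt_bounds:
  assumes "c > 0" and "r \<ge> 0"
  shows "0 \<le> 1 - r / sqrt (r\<^sup>2 + c)" and "1 - r / sqrt (r\<^sup>2 + c) \<le> c / (r\<^sup>2 + c)"
proof -
  define \<rho> where "\<rho> = sqrt (r\<^sup>2 + c)"
  have \<rho>2: "\<rho> * \<rho> = r\<^sup>2 + c" unfolding \<rho>_def using assms by simp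
  have "r < \<rho>" unfolding \<rho>_def using assms by (intro real_less_rsqrt) simp
  then have "\<rho> > 0" using assms by linarith
  with \<open>r < \<rho>\<close> show "0 \<le> 1 - r / sqrt (r\<^sup>2 + c)" by (simp add: \<rho>_def[symmetric])
  have "1 - r / \<rho> = (\<rho> - r) / \<rho>" using \<open>\<rho> > 0\<close> by (simp add: field_simps)
  also have "\<dots> = ((\<rho> - r) * (\<rho> + r)) / (\<rho> * (\<rho> + r))"
    using \<open>\<rho> > 0\<close> assms by simp
  also have "\<dots> = c / (\<rho> * (\<rho> + r))" using \<rho>2 by (simp add: algebra_simps power2_eq_square)
  also have "\<dots> \<le> c / (\<rho> * \<rho>)" using \<open>\<rho> > 0\<close> assms by (intro divide_left_mono mult_left_mono) auto
  finally show "1 - r / sqrt (r\<^sup>2 + c) \<le> c / (r\<^sup>2 + c)" using \<rho>2 by (simp add: \<rho>_def)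
qed

text \<open>The factor \<open>1 - |x|/\<rho>\<close>, by which the smoothed norm \<open>\<rho> = sqrt (|x|\<^sup>2 + \<mu>\<^sup>4)\<close> grows
  slower than \<open>|x|\<close>, is small where \<open>\<rho> \<ge> \<mu>\<close>; where \<open>\<rho> < \<mu>\<close>, the shift \<open>\<mu> + \<mu>\<^sup>2\<close> puts the
  smoothed positive part in its flat region.\<close>

lemma smooth_pos'_cone_defect:
  assumes "\<mu> > 0" and "r \<ge> 0" and "s > 0"
  shows "smooth_pos' (\<mu> ^ 3) (sqrt (r\<^sup>2 + \<mu> ^ 4) - s - (\<mu> + \<mu>\<^sup>2)) * (1 - r / sqrt (r\<^sup>2 + \<mu> ^ 4)) \<le> \<mu>\<^sup>2"
proof -
  define \<rho> where "\<rho> = sqrt (r\<^sup>2 + \<mu> ^ 4)"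
  define A where "A = smooth_pos' (\<mu> ^ 3) (\<rho> - s - (\<mu> + \<mu>\<^sup>2))"
  define W where "W = 1 - r / \<rho>"
  have "\<mu> ^ 4 > 0" "\<mu> ^ 3 > 0" using assms by simp_all
  note W = one_minus_div_sqrt_bounds[OF this(1) assms(2), folded \<rho>_def W_def]
  have A: "0 \<le> A" "A \<le> 1" unfolding A_def using smooth_pos'_bounds[OF \<open>\<mu> ^ 3 > 0\<close>] by auto
  have "A * W \<le> \<mu>\<^sup>2"
  proof (cases "\<rho> \<ge> \<mu>")
    case True
    then have "\<mu>\<^sup>2 \<le> r\<^sup>2 + \<mu> ^ 4"
      using assms real_sqrt_le_iff[of "\<mu>\<^sup>2" "r\<^sup>2 + \<mu> ^ 4"] by (simp add: \<rho>_def)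
    moreover have "0 < (r\<^sup>2 + \<mu> ^ 4) * \<mu>\<^sup>2" using assms by (simp add: add_nonneg_pos)
    ultimately have "\<mu> ^ 4 / (r\<^sup>2 + \<mu> ^ 4) \<le> \<mu> ^ 4 / \<mu>\<^sup>2" by (intro divide_left_mono) auto
    also have "\<dots> = \<mu>\<^sup>2" using assms by (simp add: power_numeral_reduce)
    finally have "W \<le> \<mu>\<^sup>2" using W(2) by linarith
    then show ?thesis using A W(1) mult_left_le_one_le[of W A] by linarith
  next
    case False
    then have "A \<le> (\<mu> ^ 3)\<^sup>2 / (4 * (\<mu>\<^sup>2)\<^sup>2)"
      unfolding A_def using assms \<open>\<mu> ^ 3 > 0\<close> by (intro smooth_pos'_le_of_le_neg) auto
    also have "\<dots> = \<mu>\<^sup>2 / 4" using assms by (simp add: power_numeral_reduce field_simps)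
    finally have "A \<le> \<mu>\<^sup>2 / 4" .
    moreover have "W \<le> 1" using assms by (simp add: W_def \<rho>_def)
    then have "A * W \<le> A" using A(1) mult_left_le by blast
    ultimately show ?thesis using zero_le_power2[of \<mu>] by linarith
  qed
  then show ?thesis by (simp add: A_def W_def \<rho>_def)
qed

text \<open>A smoothing of \<open>-(|x| - s)\<^sup>+\<close>, in \<open>q = |x|\<^sup>2\<close>: \<open>smooth_pos\<close> smooths the positive part
  and \<open>sqrt (q + \<mu>\<^sup>4)\<close> the norm. The slowdown \<open>2 \<mu>\<^sup>2 s\<close> makes it a strict subsolution, the
  term \<open>\<mu>\<^sup>2 sqrt (q + 1)\<close> keeps it below the solution for large \<open>|x|\<close>.\<close>

definition cone_arg :: "real \<Rightarrow> real \<Rightarrow> real \<Rightarrow> real" where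
  "cone_arg \<mu> q s = sqrt (q + \<mu> ^ 4) - s - (\<mu> + \<mu>\<^sup>2)"

definition cone_barrier :: "real \<Rightarrow> real \<Rightarrow> real \<Rightarrow> real \<Rightarrow> real \<Rightarrow> real \<Rightarrow> real" where
  "cone_barrier \<mu> K k T q s = - (\<mu> + \<mu>\<^sup>2 + smooth_pos (\<mu> ^ 3) (cone_arg \<mu> q s) + 2 * \<mu>\<^sup>2 * s
     + \<mu>\<^sup>2 * sqrt (q + 1) + K * exp (k * (s - T)))"

definition cone_barrier_q :: "real \<Rightarrow> real \<Rightarrow> real \<Rightarrow> real" where
  "cone_barrier_q \<mu> q s = - (smooth_pos' (\<mu> ^ 3) (cone_arg \<mu> q s) * (1 / (2 * sqrt (q + \<mu> ^ 4)))
     + \<mu>\<^sup>2 * (1 / (2 * sqrt (q + 1))))"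

definition cone_barrier_qq :: "real \<Rightarrow> real \<Rightarrow> real \<Rightarrow> real" where
  "cone_barrier_qq \<mu> q s = - (smooth_pos'' (\<mu> ^ 3) (cone_arg \<mu> q s) * (1 / (2 * sqrt (q + \<mu> ^ 4)))
       * (1 / (2 * sqrt (q + \<mu> ^ 4)))
     + smooth_pos' (\<mu> ^ 3) (cone_arg \<mu> q s) * (- 1 / (4 * (q + \<mu> ^ 4) * sqrt (q + \<mu> ^ 4)))
     + \<mu>\<^sup>2 * (- 1 / (4 * (q + 1) * sqrt (q + 1))))"

definition cone_barrier_s :: "real \<Rightarrow> real \<Rightarrow> real \<Rightarrow> real \<Rightarrow> real \<Rightarrow> real \<Rightarrow> real" where
  "cone_barrier_s \<mu> K k T q s = smooth_pos' (\<mu> ^ 3) (cone_arg \<mu> q s) - 2 * \<mu>\<^sup>2 - K * k * exp (k * (s - T))"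

lemma has_real_derivative_cone_arg:
  assumes "\<mu> > 0" and "q \<ge> 0"
  shows "((\<lambda>q. cone_arg \<mu> q s) has_real_derivative 1 / (2 * sqrt (q + \<mu> ^ 4))) (at q)"
    and "((\<lambda>s. cone_arg \<mu> q s) has_real_derivative - 1) (at s)"
proof -
  have "q + \<mu> ^ 4 > 0" using assms by (simp add: add_nonneg_pos)
  from DERIV_diff[OF DERIV_diff[OF has_real_derivative_sqrt_shift[OF this] DERIV_const] DERIV_const]
  show "((\<lambda>q. cone_arg \<mu> q s) has_real_derivative 1 / (2 * sqrt (q + \<mu> ^ 4))) (at q)"
    by (simp add: cone_arg_def)
  show "((\<lambda>s. cone_arg \<mu> q s) has_real_derivative - 1) (at s)"
    unfolding cone_arg_def by (auto intro!: derivative_eq_intros)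
qed

lemma has_real_derivative_cone_barrier:
  assumes "\<mu> > 0" and "q \<ge> 0"
  shows "((\<lambda>q. cone_barrier \<mu> K k T q s) has_real_derivative cone_barrier_q \<mu> q s) (at q)"
    and "((\<lambda>q. cone_barrier_q \<mu> q s) has_real_derivative cone_barrier_qq \<mu> q s) (at q)"
    and "((\<lambda>s. cone_barrier \<mu> K k T q s) has_real_derivative cone_barrier_s \<mu> K k T q s) (at s)"
proof -
  have pos: "q + \<mu> ^ 4 > 0" "q + 1 > 0" using assms by (simp_all add: add_nonneg_pos)
  have "\<mu> ^ 3 > 0" using assms(1) by simp
  note sp = has_real_derivative_smooth_pos[OF this]
  note arg = has_real_derivative_cone_arg[OF assms, of s]
  have "((\<lambda>q. \<mu> + \<mu>\<^sup>2 + smooth_pos (\<mu> ^ 3) (cone_arg \<mu> q s) + 2 * \<mu>\<^sup>2 * s + \<mu>\<^sup>2 * sqrt (q + 1)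
      + K * exp (k * (s - T))) has_real_derivative 0 + smooth_pos' (\<mu> ^ 3) (cone_arg \<mu> q s)
      * (1 / (2 * sqrt (q + \<mu> ^ 4))) + 0 + \<mu>\<^sup>2 * (1 / (2 * sqrt (q + 1))) + 0) (at q)"
    by (intro DERIV_add DERIV_const DERIV_cmult DERIV_chain2[OF sp(1)] arg(1)
        has_real_derivative_sqrt_shift pos)
  from DERIV_minus[OF this]
  show "((\<lambda>q. cone_barrier \<mu> K k T q s) has_real_derivative cone_barrier_q \<mu> q s) (at q)"
    by (simp add: cone_barrier_def cone_barrier_q_def)
  have "((\<lambda>q. smooth_pos' (\<mu> ^ 3) (cone_arg \<mu> q s) * (1 / (2 * sqrt (q + \<mu> ^ 4)))
      + \<mu>\<^sup>2 * (1 / (2 * sqrt (q + 1)))) has_real_derivative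
      smooth_pos'' (\<mu> ^ 3) (cone_arg \<mu> q s) * (1 / (2 * sqrt (q + \<mu> ^ 4))) * (1 / (2 * sqrt (q + \<mu> ^ 4)))
      + smooth_pos' (\<mu> ^ 3) (cone_arg \<mu> q s) * (- 1 / (4 * (q + \<mu> ^ 4) * sqrt (q + \<mu> ^ 4)))
      + \<mu>\<^sup>2 * (- 1 / (4 * (q + 1) * sqrt (q + 1)))) (at q)"
    using DERIV_add[OF DERIV_mult[OF DERIV_chain2[OF sp(2) arg(1)] has_real_derivative_inverse_sqrt_shift[OF pos(1)]]
        DERIV_cmult[OF has_real_derivative_inverse_sqrt_shift[OF pos(2)], of "\<mu>\<^sup>2"]]
    by simp
  from DERIV_minus[OF this]
  show "((\<lambda>q. cone_barrier_q \<mu> q s) has_real_derivative cone_barrier_qq \<mu> q s) (at q)"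
    by (simp add: cone_barrier_q_def cone_barrier_qq_def)
  from arg(2) have "((\<lambda>s. \<mu> + \<mu>\<^sup>2 + smooth_pos (\<mu> ^ 3) (cone_arg \<mu> q s) + 2 * \<mu>\<^sup>2 * s + \<mu>\<^sup>2 * sqrt (q + 1)
      + K * exp (k * (s - T))) has_real_derivative 0 + smooth_pos' (\<mu> ^ 3) (cone_arg \<mu> q s) * - 1
      + 2 * \<mu>\<^sup>2 * 1 + 0 + K * (exp (k * (s - T)) * (k * (1 - 0)))) (at s)"
    by (intro DERIV_add DERIV_const DERIV_cmult DERIV_chain2[OF sp(1)] DERIV_ident
        DERIV_chain2[OF DERIV_exp] DERIV_diff)
  from DERIV_minus[OF this]
  show "((\<lambda>s. cone_barrier \<mu> K k T q s) has_real_derivative cone_barrier_s \<mu> K k T q s) (at s)"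
    by (simp add: cone_barrier_def cone_barrier_s_def algebra_simps)
qed

lemma continuous_on_cone_barrier_derivatives:
  assumes "\<mu> > 0"
  shows "continuous_on ({0..} \<times> UNIV) (\<lambda>w. cone_barrier_s \<mu> K k T (fst w) (snd w))"
    and "continuous_on ({0..} \<times> UNIV) (\<lambda>w. cone_barrier_q \<mu> (fst w) (snd w))"
    and "continuous_on ({0..} \<times> UNIV) (\<lambda>w. cone_barrier_qq \<mu> (fst w) (snd w))"
proof -
  have "\<mu> ^ 4 > 0" "\<mu> ^ 6 > 0" using assms by simp_all
  then have nz: "\<And>a. 0 \<le> a \<Longrightarrow> a + \<mu> ^ 4 \<noteq> 0" "\<And>a. 0 \<le> a \<Longrightarrow> 4 * a + 4 * \<mu> ^ 4 \<noteq> 0"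
    "\<And>X. X\<^sup>2 + \<mu> ^ 6 \<noteq> 0" "\<And>X. 2 * X\<^sup>2 + 2 * \<mu> ^ 6 \<noteq> 0"
    by (smt (verit) zero_le_power2)+
  show "continuous_on ({0..} \<times> UNIV) (\<lambda>w. cone_barrier_s \<mu> K k T (fst w) (snd w))"
    and "continuous_on ({0..} \<times> UNIV) (\<lambda>w. cone_barrier_q \<mu> (fst w) (snd w))"
    and "continuous_on ({0..} \<times> UNIV) (\<lambda>w. cone_barrier_qq \<mu> (fst w) (snd w))"
    unfolding cone_barrier_s_def cone_barrier_q_def cone_barrier_qq_def smooth_pos'_def smooth_pos''_def
      cone_arg_def
    by (auto intro!: continuous_intros simp: nz)
qed

lemma C21_test_cone_barrier:
  assumes "\<mu> > 0"
  shows "C21_test (\<lambda>z. cone_barrier \<mu> K k T (fst z \<bullet> fst z) (snd z))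
     (\<lambda>z. cone_barrier_s \<mu> K k T (fst z \<bullet> fst z) (snd z))
     (\<lambda>z. radial_grad (cone_barrier_q \<mu> (fst z \<bullet> fst z) (snd z)) (fst z))
     (\<lambda>z. radial_hess (cone_barrier_q \<mu> (fst z \<bullet> fst z) (snd z)) (cone_barrier_qq \<mu> (fst z \<bullet> fst z) (snd z)) (fst z))"
  using has_real_derivative_cone_barrier[OF assms] continuous_on_cone_barrier_derivatives[OF assms]
  by (rule C21_test_radial)

lemma upper_env_Feff_le: "upper_env (\<lambda>X q. Feff X q y) X p \<le> - norm p"
proof -
  have "upper_env (\<lambda>X q. Feff X q y) X p \<le> (\<lambda>z. - norm (snd z)) (X, p)"
    by (rule upper_env_le_isCont[OF locally_bounded_Feff]) (simp_all add: Feff_eq continuous_intros)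
  then show ?thesis by simp
qed

lemma cone_barrier_strict_sub:
  assumes "\<mu> > 0" and "K \<ge> 0" and "k \<ge> 0" and "s > 0"
  shows "cone_barrier_s \<mu> K k T (x \<bullet> x) s + upper_env (\<lambda>X q. Feff X q x)
     (radial_hess (cone_barrier_q \<mu> (x \<bullet> x) s) (cone_barrier_qq \<mu> (x \<bullet> x) s) x)
     (radial_grad (cone_barrier_q \<mu> (x \<bullet> x) s) x) < 0"
proof -
  define \<rho> where "\<rho> = sqrt ((norm x)\<^sup>2 + \<mu> ^ 4)"
  define A where "A = smooth_pos' (\<mu> ^ 3) (cone_arg \<mu> (x \<bullet> x) s)"
  define \<alpha> where "\<alpha> = cone_barrier_q \<mu> (x \<bullet> x) s"
  have "\<rho> > 0" using assms by (simp add: \<rho>_def add_nonneg_pos)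
  have A: "0 \<le> A" "A \<le> 1" unfolding A_def using smooth_pos'_bounds assms by simp_all
  have "A * (1 - norm x / \<rho>) \<le> \<mu>\<^sup>2"
    using smooth_pos'_cone_defect[OF assms(1) norm_ge_zero assms(4), of x]
    by (simp add: A_def \<rho>_def cone_arg_def power2_norm_eq_inner)
  then have "A - A * norm x / \<rho> \<le> \<mu>\<^sup>2" by (simp add: right_diff_distrib)
  moreover have "A * norm x / \<rho> \<le> norm (radial_grad \<alpha> x)"
  proof -
    have "0 \<le> \<mu>\<^sup>2 * (1 / (2 * sqrt (x \<bullet> x + 1)))" by simp
    then have "A / (2 * \<rho>) \<le> - \<alpha>"
      by (simp add: \<alpha>_def A_def \<rho>_def cone_barrier_q_def power2_norm_eq_inner)
    moreover have "0 \<le> A / (2 * \<rho>)" using A \<open>\<rho> > 0\<close> by simp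
    ultimately have "A / (2 * \<rho>) * (2 * norm x) \<le> \<bar>\<alpha>\<bar> * (2 * norm x)"
      by (intro mult_right_mono) auto
    then show ?thesis using \<open>\<rho> > 0\<close> by (simp add: radial_grad_def)
  qed
  moreover have "cone_barrier_s \<mu> K k T (x \<bullet> x) s \<le> A - 2 * \<mu>\<^sup>2"
    using assms by (simp add: cone_barrier_s_def A_def)
  moreover have "upper_env (\<lambda>X q. Feff X q x) (radial_hess \<alpha> (cone_barrier_qq \<mu> (x \<bullet> x) s) x)
      (radial_grad \<alpha> x) \<le> - norm (radial_grad \<alpha> x)"
    by (rule upper_env_Feff_le)
  moreover have "\<mu>\<^sup>2 > 0" using assms by simp
  ultimately show ?thesis unfolding \<alpha>_def by linarith
qed

lemma cone_barrier_le:
  fixes y :: vec2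
  assumes "\<mu> > 0" and "s \<ge> 0"
  shows "cone_barrier \<mu> K k T (y \<bullet> y) s \<le> s - norm y - \<mu>\<^sup>2 * norm y - K * exp (k * (s - T))"
proof -
  have "norm y \<le> sqrt (y \<bullet> y + \<mu> ^ 4)" "norm y \<le> sqrt (y \<bullet> y + 1)"
    by (simp_all add: real_le_rsqrt power2_norm_eq_inner[symmetric])
  moreover have "cone_arg \<mu> (y \<bullet> y) s \<le> smooth_pos (\<mu> ^ 3) (cone_arg \<mu> (y \<bullet> y) s)"
    using assms by (intro le_smooth_pos) simp
  moreover have "\<mu>\<^sup>2 * norm y \<le> \<mu>\<^sup>2 * sqrt (y \<bullet> y + 1)"
    using calculation(2) by (intro mult_left_mono) auto
  moreover have "0 \<le> 2 * \<mu>\<^sup>2 * s" using assms by simp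
  ultimately show ?thesis unfolding cone_barrier_def cone_arg_def by linarith
qed

lemma cone_barrier_on_cone:
  assumes "\<mu> > 0" and "\<mu> \<le> 1" and "t \<ge> 0" and "K * exp (k * (t - T)) = \<mu>"
  shows "- \<mu> * (9 / 2 + 3 * t) \<le> cone_barrier \<mu> K k T (t\<^sup>2) t"
proof -
  have "(\<mu>\<^sup>2)\<^sup>2 = \<mu> ^ 4" by (simp flip: power_mult)
  then have "t\<^sup>2 + \<mu> ^ 4 \<le> (t + \<mu>\<^sup>2)\<^sup>2" using assms by (simp add: power2_sum)
  then have "sqrt (t\<^sup>2 + \<mu> ^ 4) \<le> t + \<mu>\<^sup>2" using assms by (intro real_le_lsqrt) simp_all
  then have "smooth_pos (\<mu> ^ 3) (cone_arg \<mu> (t\<^sup>2) t) \<le> \<mu> ^ 3 / 2"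
    using assms by (intro smooth_pos_le_of_nonpos) (simp_all add: cone_arg_def)
  moreover have "\<mu>\<^sup>2 * sqrt (t\<^sup>2 + 1) \<le> \<mu> * (t + 1)"
  proof (rule mult_mono)
    show "sqrt (t\<^sup>2 + 1) \<le> t + 1" using assms by (intro real_le_lsqrt) (simp_all add: power2_sum)
  qed (use assms in \<open>simp_all add: power2_eq_square mult_le_one\<close>)
  moreover have "\<mu>\<^sup>2 \<le> \<mu>" "\<mu> ^ 3 \<le> \<mu>" "\<mu>\<^sup>2 * t \<le> \<mu> * t"
    using assms by (simp_all add: power2_eq_square power3_eq_cube mult_le_one mult_right_mono)
  ultimately show ?thesis
    using assms by (simp add: cone_barrier_def algebra_simps)
qed

lemma continuous_cone_barrier:
  "continuous_on UNIV (\<lambda>z::vec2 \<times> real. cone_barrier \<mu> K k T (fst z \<bullet> fst z) (snd z))"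
  unfolding cone_barrier_def cone_arg_def
  by (intro continuous_intros continuous_on_compose2[OF continuous_smooth_pos]) auto

lemma cone_barrier_le_cauchy_sol:
  assumes "\<mu> > 0" and "k \<ge> 0" and "T + C \<le> K" and "C \<ge> 0"
    and sol: "cauchy_sol Feff (\<lambda>x. - norm x) u"
    and drift: "\<And>y s. 0 \<le> s \<Longrightarrow> s \<le> T \<Longrightarrow> - norm y - C \<le> u (y, s)"
    and "0 \<le> s" "s \<le> T"
  shows "cone_barrier \<mu> K k T (x \<bullet> x) s \<le> u (x, s)"
proof -
  have "K \<ge> 0" "0 \<le> T" using assms by linarith+
  note le = cone_barrier_le[OF \<open>\<mu> > 0\<close>, where K=K and k=k and T=T]
  have nonneg: "0 \<le> \<mu>\<^sup>2 * norm y" "0 \<le> K * exp (k * (s' - T))" for y :: vec2 and s'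
    using \<open>K \<ge> 0\<close> by simp_all
  have "cone_barrier \<mu> K k T (fst (x, s) \<bullet> fst (x, s)) (snd (x, s)) \<le> u (x, s)"
  proof (rule comparison_super[where R="(T + C) / \<mu>\<^sup>2", OF _ _ C21_test_cone_barrier[OF \<open>\<mu> > 0\<close>]
        continuous_cone_barrier], simp_all only: fst_conv snd_conv)
    show "par_super Feff u" and "continuous_on (UNIV \<times> {0..}) u"
      using sol by (simp_all add: cauchy_sol_def)
    fix y :: vec2
    show "cone_barrier_s \<mu> K k T (y \<bullet> y) s' + upper_env (\<lambda>X q. Feff X q y)
        (radial_hess (cone_barrier_q \<mu> (y \<bullet> y) s') (cone_barrier_qq \<mu> (y \<bullet> y) s') y)
        (radial_grad (cone_barrier_q \<mu> (y \<bullet> y) s') y) < 0" if "0 < s'" for s'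
      using cone_barrier_strict_sub[OF \<open>\<mu> > 0\<close> \<open>K \<ge> 0\<close> \<open>k \<ge> 0\<close> that] .
    have "u (y, 0) = - norm y" using sol by (simp add: cauchy_sol_def)
    with le[OF order_refl, where y=y] nonneg(1)[of y] nonneg(2)[of 0]
    show "cone_barrier \<mu> K k T (y \<bullet> y) 0 \<le> u (y, 0)" by linarith
    have "cone_barrier \<mu> K k T (y \<bullet> y) T \<le> T - norm y - \<mu>\<^sup>2 * norm y - K"
      using le[OF \<open>0 \<le> T\<close>, where y=y] by simp
    with nonneg(1)[of y] drift[OF \<open>0 \<le> T\<close> order_refl, of y] \<open>T + C \<le> K\<close>
    show "cone_barrier \<mu> K k T (y \<bullet> y) T \<le> u (y, T)" by linarith
    show "cone_barrier \<mu> K k T (y \<bullet> y) s' \<le> u (y, s')"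
      if "(T + C) / \<mu>\<^sup>2 \<le> norm y" "0 \<le> s'" "s' \<le> T" for s'
    proof -
      have "T + C \<le> \<mu>\<^sup>2 * norm y" using that(1) assms by (simp add: pos_divide_le_eq mult.commute)
      with le[OF that(2), where y=y] nonneg(1)[of y] nonneg(2)[of s'] drift[OF that(2,3), of y] that(3)
      show ?thesis by linarith
    qed
  qed (use assms in auto)
  then show ?thesis by simp
qed

lemma cauchy_sol_Feff_nonneg_on_cone:
  assumes sol: "cauchy_sol Feff (\<lambda>x. - norm x) u" and "t > 0" and "norm x = t"
  shows "0 \<le> u (x, t)"
proof (rule field_le_epsilon)
  fix \<gamma> :: real assume "\<gamma> > 0"
  define T where "T = t + 1"
  obtain C where "C \<ge> 0" and C: "\<And>y s. 0 \<le> s \<Longrightarrow> s \<le> T \<Longrightarrow> \<bar>u (y, s) - - norm y\<bar> \<le> C"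
    using cauchy_sol_drift[OF sol, of T] \<open>t > 0\<close> unfolding T_def by auto
  have drift: "- norm y - C \<le> u (y, s)" if "0 \<le> s" "s \<le> T" for y s
    using C[OF that, of y] by (simp add: abs_le_iff)
  define \<mu> where "\<mu> = min 1 (\<gamma> / (3 * t + 6))"
  define K where "K = T + C + 1"
  define k where "k = ln (K / \<mu>)"
  have "\<mu> > 0" "\<mu> \<le> 1" "K \<ge> 1" using \<open>\<gamma> > 0\<close> \<open>t > 0\<close> \<open>C \<ge> 0\<close> by (auto simp: \<mu>_def K_def T_def)
  then have "k \<ge> 0" and "K * exp (k * (t - T)) = \<mu>"
    by (simp_all add: k_def T_def exp_minus)
  have "\<mu> * (9 / 2 + 3 * t) < \<gamma>"
  proof -
    have "\<mu> * (9 / 2 + 3 * t) \<le> \<gamma> / (3 * t + 6) * (9 / 2 + 3 * t)"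
      using \<open>t > 0\<close> by (intro mult_right_mono) (auto simp: \<mu>_def)
    also have "\<dots> < \<gamma>" using \<open>\<gamma> > 0\<close> \<open>t > 0\<close> by (simp add: field_simps)
    finally show ?thesis .
  qed
  moreover have "- \<mu> * (9 / 2 + 3 * t) \<le> cone_barrier \<mu> K k T (x \<bullet> x) t"
    using cone_barrier_on_cone[OF \<open>\<mu> > 0\<close> \<open>\<mu> \<le> 1\<close> _ \<open>K * exp (k * (t - T)) = \<mu>\<close>] \<open>t > 0\<close> \<open>norm x = t\<close>
    by (simp add: power2_norm_eq_inner[symmetric])
  moreover have "cone_barrier \<mu> K k T (x \<bullet> x) t \<le> u (x, t)"
    using \<open>\<mu> > 0\<close> \<open>k \<ge> 0\<close> \<open>C \<ge> 0\<close> \<open>t > 0\<close>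
    by (intro cone_barrier_le_cauchy_sol[OF _ _ _ _ sol drift]) (simp_all add: K_def T_def)
  ultimately show "0 \<le> u (x, t) + \<gamma>" by linarith
qed

theorem proposition1p5:
  fixes \<epsilon> :: real and ueps u :: "vec2 \<times> real \<Rightarrow> real" and x :: vec2 and t :: real
  assumes "\<epsilon> > 0"
    and "cauchy_sol (Feps \<epsilon>) (\<lambda>x. - norm x) ueps"
    and "cauchy_sol Feff (\<lambda>x. - norm x) u"
    and "t \<ge> 0" and "norm x = t" and "t > \<epsilon> * (1 + exp (-1))"
  shows "\<bar>ueps (x, t) - u (x, t)\<bar> \<ge> (1/2) * \<epsilon> * (ln (t / \<epsilon> - 1) + 1)"
proof -
  \<comment> \<open>of the lower bound on \<open>t\<close> only \<open>t > \<epsilon>\<close> is used\<close>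
  have "\<epsilon> * 1 \<le> \<epsilon> * (1 + exp (- 1))" using assms(1) by (intro mult_left_mono) auto
  then have "\<epsilon> < t" using assms(6) by linarith
  then have "0 < t / \<epsilon> - 1" using assms(1) by (simp add: field_simps)
  then have "ln (t / \<epsilon> - 1) \<le> ln (t / \<epsilon>)" by simp
  then have "(1/2) * \<epsilon> * (ln (t / \<epsilon> - 1) + 1) \<le> (1/2) * \<epsilon> * (ln (t / \<epsilon>) + 1)"
    using assms(1) by (intro mult_left_mono) auto
  also have "\<dots> \<le> - ueps (x, t)"
    using cauchy_sol_Feps_le_on_cone[OF assms(1,2), of t x] \<open>\<epsilon> < t\<close> assms(1,5) by simp
  also have "\<dots> \<le> \<bar>ueps (x, t) - u (x, t)\<bar>"
    using cauchy_sol_Feff_nonneg_on_cone[OF assms(3), of t x] \<open>\<epsilon> < t\<close> assms(1,5) by simp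
  finally show ?thesis .
qed

end
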